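(* Let $G$ be a finite solvable group, $H$ a subgroup of $G$, and $i\geq 1$ an integer. Then there exist finitely many (possibly zero) subgroups $H_1,\dots,H_r$ of $G$ and one-dimensional characters $\chi_j$ of $H_j$ such that \[\mathrm{Ind}_H^G(1_H)=\mathrm{Ind}_{HG^i}^G(1_{HG^i})+\sum_{j=1}^r \mathrm{Ind}_{H_j}^G(\chi_j).\]
   Context: The derived series of $G$ is $G^0=G$, $G^1=[G,G]$, $G^{k}=[G^{k-1},G^{k-1}]$ for $k\ge1$, where $[X,X]$ is the subgroup generated by all commutators $xyx^{-1}y^{-1}$, $x,y\in X$. $1_H$ is the trivial character of $H$, $\mathrm{Ind}$ denotes induction of characters, and a one-dimensional character is a character of degree $1$. *)

theory Defs
  imports "HOL-Algebra.Algebra" "HOL-Analysis.Analysis"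
begin

definition induced :: "('a, 'b) monoid_scheme \<Rightarrow> 'a set \<Rightarrow> ('a \<Rightarrow> complex) \<Rightarrow> 'a \<Rightarrow> complex" where
  "induced G H chi g =
     (1 / of_nat (card H)) *
     (\<Sum>x\<in>carrier G. (if x \<otimes>\<^bsub>G\<^esub> g \<otimes>\<^bsub>G\<^esub> inv\<^bsub>G\<^esub> x \<in> H
                         then chi (x \<otimes>\<^bsub>G\<^esub> g \<otimes>\<^bsub>G\<^esub> inv\<^bsub>G\<^esub> x) else 0))"

definition trivial_char :: "'a \<Rightarrow> complex" where
  "trivial_char x = 1"

definition linear_char :: "('a, 'b) monoid_scheme \<Rightarrow> 'a set \<Rightarrow> ('a \<Rightarrow> complex) \<Rightarrow> bool" where
  "linear_char G H chi \<longleftrightarrow>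
     (\<forall>x\<in>H. chi x \<noteq> 0) \<and> (\<forall>x\<in>H. \<forall>y\<in>H. chi (x \<otimes>\<^bsub>G\<^esub> y) = chi x * chi y)"

definition derived_series :: "('a, 'b) monoid_scheme \<Rightarrow> nat \<Rightarrow> 'a set" where
  "derived_series G k = (derived G ^^ k) (carrier G)"

end

theory Submission
  imports Defs
begin

text \<open>For a subgroup \<open>L\<close> and a normal subgroup \<open>B\<close> whose commutators lie in \<open>L\<close>, the group
  \<open>B/(B \<inter> L)\<close> is abelian and \<open>L\<close> permutes its characters \<open>f\<close> by conjugation. Averaging the formula for
  \<open>Ind_L^G 1\<close> over \<open>B\<close>-conjugates and expanding the indicator of \<open>B \<inter> L\<close> by character orthogonality gives
  \<open>Ind_L^G 1 = Ind_LB^G 1 + \<Sum> Ind_T^G f'\<close>, the sum running over representatives of the nontrivial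
  \<open>L\<close>-orbits, where \<open>T = Stab_L(f) B\<close> is the inertia group and \<open>f'(l b) = f b\<close> is linear.
  Taking \<open>L = H G\<^sup>k\<^sup>+\<^sup>1\<close> and \<open>B = G\<^sup>k\<close> and telescoping from \<open>k = i\<close> up to a \<open>k\<close> with \<open>G\<^sup>k = 1\<close>
  (solvability) yields the theorem.\<close>

lemma card_eq_card_image_mult_fibers:
  assumes "finite A" "\<And>y. y \<in> f ` A \<Longrightarrow> card {x\<in>A. f x = y} = k"
  shows "card A = card (f ` A) * k"
proof -
  have "card A = (\<Sum>y\<in>f ` A. card {x\<in>A. f x = y})"
    using card_eq_sum sum.group[of A "f ` A" f "\<lambda>_. 1::nat"] assms(1) by auto
  also have "\<dots> = (\<Sum>y\<in>f ` A. k)" using assms(2) by (intro sum.cong) auto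
  finally show ?thesis by simp
qed

lemma sum_eq_0_if_reindex_scales:
  fixes F :: "'c \<Rightarrow> complex"
  assumes "bij_betw p A A" "\<And>u. u \<in> A \<Longrightarrow> F (p u) = c * F u" "c \<noteq> 1"
  shows "sum F A = 0"
proof -
  have "sum F A = sum (F \<circ> p) A" using sum.reindex_bij_betw[OF assms(1), of F] by simp
  also have "\<dots> = c * sum F A" using assms(2) by (simp add: sum_distrib_left)
  finally show ?thesis using assms(3) by (metis mult_cancel_right1 mult.commute)
qed

lemma sum_lessThan_add:
  fixes F :: "nat \<Rightarrow> 'c::comm_monoid_add"
  shows "(\<Sum>j<a + b. F j) = (\<Sum>j<a. F j) + (\<Sum>j<b. F (a + j))"
  by (induction b) (simp_all add: add.assoc)

context group
begin

lemma m_inv_cancel_left [simp]: "x \<in> carrier G \<Longrightarrow> y \<in> carrier G \<Longrightarrow> x \<otimes> (inv x \<otimes> y) = y"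
  by (metis inv_closed l_one m_assoc r_inv)

lemma inv_m_cancel_left [simp]: "x \<in> carrier G \<Longrightarrow> y \<in> carrier G \<Longrightarrow> inv x \<otimes> (x \<otimes> y) = y"
  by (metis inv_closed l_one m_assoc l_inv)

lemma subgroup_nat_pow_closed: "subgroup S G \<Longrightarrow> x \<in> S \<Longrightarrow> x [^] (k::nat) \<in> S"
  by (induction k) (simp_all add: subgroup.one_closed subgroup.m_closed)

lemma bij_betw_mult_left: "c \<in> carrier G \<Longrightarrow> bij_betw (\<lambda>x. c \<otimes> x) (carrier G) (carrier G)"
  by (rule bij_betwI[where g = "\<lambda>x. inv c \<otimes> x"]) auto

lemma bij_betw_mult_left_subgroup:
  assumes "subgroup S G" "c \<in> S" shows "bij_betw (\<lambda>x. c \<otimes> x) S S"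
  by (rule bij_betwI[where g = "\<lambda>x. inv c \<otimes> x"])
    (use assms in \<open>auto simp: subgroup.m_closed subgroup.m_inv_closed subgroup.mem_carrier\<close>)

lemma sum_hom_eq_0:
  assumes "subgroup S G"
    and "\<And>x y. x \<in> S \<Longrightarrow> y \<in> S \<Longrightarrow> f (x \<otimes> y) = f x * f y"
    and "c \<in> S" "f c \<noteq> 1"
  shows "(\<Sum>x\<in>S. f x) = (0::complex)"
  by (rule sum_eq_0_if_reindex_scales[OF bij_betw_mult_left_subgroup[OF assms(1,3)] _ assms(4)])
    (use assms in auto)

lemma sum_conj_conjugates:
  assumes "c \<in> carrier G" "g \<in> carrier G"
  shows "(\<Sum>x\<in>carrier G. F (c \<otimes> (x \<otimes> g \<otimes> inv x) \<otimes> inv c)) = (\<Sum>x\<in>carrier G. F (x \<otimes> g \<otimes> inv x))"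
proof -
  have "c \<otimes> (x \<otimes> g \<otimes> inv x) \<otimes> inv c = (c \<otimes> x) \<otimes> g \<otimes> inv (c \<otimes> x)" if "x \<in> carrier G" for x
    using assms that by (simp add: m_assoc inv_mult_group)
  then have "(\<Sum>x\<in>carrier G. F (c \<otimes> (x \<otimes> g \<otimes> inv x) \<otimes> inv c)) =
      (\<Sum>x\<in>carrier G. (\<lambda>y. F (y \<otimes> g \<otimes> inv y)) (c \<otimes> x))"
    by (intro sum.cong) auto
  also have "\<dots> = (\<Sum>x\<in>carrier G. F (x \<otimes> g \<otimes> inv x))"
    using sum.reindex_bij_betw[OF bij_betw_mult_left[OF assms(1)]] by simp
  finally show ?thesis .
qed

lemma sum_conjugates_average:
  assumes "B \<subseteq> carrier G" "g \<in> carrier G"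
  shows "of_nat (card B) * (\<Sum>x\<in>carrier G. F (x \<otimes> g \<otimes> inv x)) =
    (\<Sum>x\<in>carrier G. \<Sum>c\<in>B. F (c \<otimes> (x \<otimes> g \<otimes> inv x) \<otimes> inv c))"
proof -
  have "(\<Sum>x\<in>carrier G. \<Sum>c\<in>B. F (c \<otimes> (x \<otimes> g \<otimes> inv x) \<otimes> inv c)) =
      (\<Sum>c\<in>B. \<Sum>x\<in>carrier G. F (c \<otimes> (x \<otimes> g \<otimes> inv x) \<otimes> inv c))" by (rule sum.swap)
  also have "\<dots> = (\<Sum>c\<in>B. \<Sum>x\<in>carrier G. F (x \<otimes> g \<otimes> inv x))"
    by (rule sum.cong[OF refl], rule sum_conj_conjugates) (use assms in auto)
  finally show ?thesis by simp
qed

lemma set_mult_normal_subgroup: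
  assumes "subgroup P G" "N \<lhd> G" shows "subgroup (P <#> N) G"
proof -
  have "second_isomorphism_grp N G P"
    unfolding second_isomorphism_grp_def second_isomorphism_grp_axioms_def using assms by auto
  then have "subgroup (N <#> P) G" by (rule second_isomorphism_grp.normal_set_mult_subgroup)
  then show ?thesis using commut_normal[OF assms] by simp
qed

lemma set_mult_subgroup_absorb:
  assumes "subgroup K G" "subgroup H G" "K \<subseteq> H"
  shows "K <#> H = H"
proof
  show "K <#> H \<subseteq> H" unfolding set_mult_def using assms by (auto simp: subgroup.m_closed)
  have "\<one> \<otimes> x \<in> K <#> H" if "x \<in> H" for x
    using that subgroup.one_closed[OF assms(1)] unfolding set_mult_def by blast
  then show "H \<subseteq> K <#> H" using subgroup.mem_carrier[OF assms(2)] by force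
qed

lemma set_mult_factorisations:
  assumes PG: "subgroup P G" and QG: "subgroup Q G" and "p0 \<in> P" "q0 \<in> Q"
  shows "{x \<in> P \<times> Q. fst x \<otimes> snd x = p0 \<otimes> q0} = (\<lambda>d. (p0 \<otimes> d, inv d \<otimes> q0)) ` (P \<inter> Q)"
proof (intro equalityI subsetI)
  have c0: "p0 \<in> carrier G" "q0 \<in> carrier G"
    using assms(3,4) subgroup.mem_carrier[OF PG] subgroup.mem_carrier[OF QG] by auto
  fix x assume "x \<in> {x \<in> P \<times> Q. fst x \<otimes> snd x = p0 \<otimes> q0}"
  then obtain p q where x: "x = (p, q)" and pq: "p \<in> P" "q \<in> Q" "p \<otimes> q = p0 \<otimes> q0" by auto
  have c: "p \<in> carrier G" "q \<in> carrier G"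
    using pq subgroup.mem_carrier[OF PG] subgroup.mem_carrier[OF QG] by auto
  define d where "d = inv p0 \<otimes> p"
  have dP: "d \<in> P" unfolding d_def using assms pq by (simp add: subgroup.m_closed subgroup.m_inv_closed)
  have "inv p0 \<otimes> (p0 \<otimes> q0) \<otimes> inv q = inv p0 \<otimes> (p \<otimes> q) \<otimes> inv q" using pq by simp
  then have dq: "d = q0 \<otimes> inv q" unfolding d_def using c c0 by (simp add: m_assoc)
  have dQ: "d \<in> Q" unfolding dq using assms pq by (simp add: subgroup.m_closed subgroup.m_inv_closed)
  have "p = p0 \<otimes> d" unfolding d_def using c c0 by simp
  moreover have "q = inv d \<otimes> q0" unfolding dq using c c0 by (simp add: inv_mult_group m_assoc)
  ultimately show "x \<in> (\<lambda>d. (p0 \<otimes> d, inv d \<otimes> q0)) ` (P \<inter> Q)" using dP dQ x by blast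
next
  fix x assume "x \<in> (\<lambda>d. (p0 \<otimes> d, inv d \<otimes> q0)) ` (P \<inter> Q)"
  then obtain d where x: "x = (p0 \<otimes> d, inv d \<otimes> q0)" and d: "d \<in> P" "d \<in> Q" by auto
  have "p0 \<otimes> d \<otimes> (inv d \<otimes> q0) = p0 \<otimes> q0"
    using assms(3,4) d subgroup.mem_carrier[OF PG] subgroup.mem_carrier[OF QG] by (simp add: m_assoc)
  then show "x \<in> {x \<in> P \<times> Q. fst x \<otimes> snd x = p0 \<otimes> q0}"
    using x d assms by (simp add: subgroup.m_closed subgroup.m_inv_closed)
qed

lemma card_set_mult_mult_card_Int:
  assumes fin: "finite (carrier G)" and PG: "subgroup P G" and QG: "subgroup Q G"
  shows "card (P <#> Q) * card (P \<inter> Q) = card P * card Q"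
proof -
  let ?f = "\<lambda>x. fst x \<otimes> snd x"
  have fib: "card {x \<in> P \<times> Q. ?f x = t} = card (P \<inter> Q)" if t: "t \<in> ?f ` (P \<times> Q)" for t
  proof -
    obtain p0 q0 where pq0: "p0 \<in> P" "q0 \<in> Q" "t = p0 \<otimes> q0" using t by auto
    have "inj_on (\<lambda>d. (p0 \<otimes> d, inv d \<otimes> q0)) (P \<inter> Q)"
      by (rule inj_onI) (metis IntE PG pq0(1) subgroup.mem_carrier inv_m_cancel_left prod.inject)
    then show ?thesis
      using set_mult_factorisations[OF PG QG pq0(1,2)] pq0(3) by (simp add: card_image)
  qed
  have "finite P" "finite Q"
    using finite_subset[OF subgroup.subset fin] PG QG by auto
  then have "card (P \<times> Q) = card (?f ` (P \<times> Q)) * card (P \<inter> Q)"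
    by (intro card_eq_card_image_mult_fibers fib) simp
  moreover have "?f ` (P \<times> Q) = P <#> Q" unfolding set_mult_def by force
  ultimately show ?thesis by (simp add: card_cartesian_product)
qed

end


text \<open>Characters of \<open>S\<close> trivial on \<open>E\<close>; they are normalised to \<open>1\<close> outside \<open>S\<close> so that they form a
  finite set of functions.\<close>
definition chars_mod :: "('a, 'b) monoid_scheme \<Rightarrow> 'a set \<Rightarrow> 'a set \<Rightarrow> ('a \<Rightarrow> complex) set" where
  "chars_mod G S E = {f. (\<forall>x\<in>S. \<forall>y\<in>S. f (x \<otimes>\<^bsub>G\<^esub> y) = f x * f y) \<and> (\<forall>x\<in>E. f x = 1) \<and>
     (\<forall>x. x \<notin> S \<longrightarrow> f x = 1)}"

definition commutators_in :: "('a, 'b) monoid_scheme \<Rightarrow> 'a set \<Rightarrow> 'a set \<Rightarrow> bool" where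
  "commutators_in G S E \<longleftrightarrow> (\<forall>x\<in>S. \<forall>y\<in>S. x \<otimes>\<^bsub>G\<^esub> y \<otimes>\<^bsub>G\<^esub> inv\<^bsub>G\<^esub> x \<otimes>\<^bsub>G\<^esub> inv\<^bsub>G\<^esub> y \<in> E)"

definition adjoin :: "('a, 'b) monoid_scheme \<Rightarrow> 'a set \<Rightarrow> 'a \<Rightarrow> 'a set" where
  "adjoin G S a = {s \<otimes>\<^bsub>G\<^esub> a [^]\<^bsub>G\<^esub> (k::nat) | s k. s \<in> S}"

context group
begin

lemma commutators_inD:
  "commutators_in G S E \<Longrightarrow> x \<in> S \<Longrightarrow> y \<in> S \<Longrightarrow> x \<otimes> y \<otimes> inv x \<otimes> inv y \<in> E"
  unfolding commutators_in_def by blast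

lemma chars_modD:
  assumes "f \<in> chars_mod G S E"
  shows "x \<in> S \<Longrightarrow> y \<in> S \<Longrightarrow> f (x \<otimes> y) = f x * f y" "x \<in> E \<Longrightarrow> f x = 1" "x \<notin> S \<Longrightarrow> f x = 1"
  using assms unfolding chars_mod_def by auto

lemma chars_mod_self: "chars_mod G E E = {\<lambda>_. 1}"
  unfolding chars_mod_def by (auto intro!: ext)

lemma chars_mod_mult:
  "f \<in> chars_mod G S E \<Longrightarrow> g \<in> chars_mod G S E \<Longrightarrow> (\<lambda>y. f y * g y) \<in> chars_mod G S E"
  unfolding chars_mod_def by auto

lemma chars_mod_divide:
  "f \<in> chars_mod G S E \<Longrightarrow> g \<in> chars_mod G S E \<Longrightarrow> (\<lambda>y. f y / g y) \<in> chars_mod G S E"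
  unfolding chars_mod_def by auto

lemma chars_mod_antimono: "E \<subseteq> E' \<Longrightarrow> chars_mod G S E' \<subseteq> chars_mod G S E"
  unfolding chars_mod_def by blast

context
  fixes S E f
  assumes SG: "subgroup S G" and one_E: "\<one> \<in> E" and f: "f \<in> chars_mod G S E"
begin

lemma chars_mod_one: "f \<one> = 1"
  using chars_modD(2)[OF f one_E] .

lemma chars_mod_inverse: "x \<in> S \<Longrightarrow> f (inv x) * f x = 1"
  using chars_modD(1)[OF f, of "inv x" x] chars_mod_one
  by (simp add: subgroup.m_inv_closed[OF SG] subgroup.mem_carrier[OF SG])

lemma chars_mod_nonzero: "f x \<noteq> 0"
  using chars_mod_inverse[of x] chars_modD(3)[OF f, of x] by fastforce

lemma chars_mod_inv: "x \<in> S \<Longrightarrow> f (inv x) = 1 / f x"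
  using chars_mod_inverse chars_mod_nonzero by (simp add: field_simps)

lemma chars_mod_pow: "x \<in> S \<Longrightarrow> f (x [^] (k::nat)) = f x ^ k"
  by (induction k) (simp_all add: chars_mod_one chars_modD(1)[OF f] subgroup_nat_pow_closed[OF SG])

end

end

text \<open>Adjoining to \<open>S\<close> an element \<open>a\<close> of a group \<open>B\<close> whose commutators lie in \<open>E \<subseteq> S\<close>: the characters
  of \<open>adjoin G S a\<close> trivial on \<open>E\<close> are the extensions of those of \<open>S\<close> by an \<open>n\<close>-th root \<open>\<omega>\<close>, where
  \<open>n\<close> is the index of \<open>S\<close> in \<open>adjoin G S a\<close>.\<close>
locale char_adjoin = group G for G (structure) +
  fixes S E B a
  assumes fin: "finite (carrier G)" and SG: "subgroup S G" and EG: "subgroup E G"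
    and BG: "subgroup B G" and ES: "E \<subseteq> S" and SB: "S \<subseteq> B" and aB: "a \<in> B"
    and comm: "commutators_in G B E"
begin

definition index :: nat where "index = (LEAST k. 0 < k \<and> a [^] k \<in> S)"

lemma a_closed: "a \<in> carrier G" by (rule subgroup.mem_carrier[OF BG aB])
lemma S_closed: "x \<in> S \<Longrightarrow> x \<in> carrier G" by (rule subgroup.mem_carrier[OF SG])
lemma one_E: "\<one> \<in> E" using subgroup.one_closed[OF EG] .
lemma a_pow_in_B: "a [^] (k::nat) \<in> B" using subgroup_nat_pow_closed[OF BG aB] .

lemma index_pos: "0 < index" and a_pow_index_in_S: "a [^] index \<in> S"
proof -
  have "0 < ord a \<and> a [^] ord a \<in> S"
    using ord_ge_1[OF fin a_closed] pow_ord_eq_1[OF a_closed] subgroup.one_closed[OF SG] by simp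
  then have "0 < index \<and> a [^] index \<in> S"
    unfolding index_def by (rule LeastI[of "\<lambda>k. 0 < k \<and> a [^] k \<in> S"])
  then show "0 < index" "a [^] index \<in> S" by auto
qed

lemma a_pow_diff_in_S:
  assumes "s \<in> S" "t \<in> S" "k \<le> j" "s \<otimes> a [^] (k::nat) = t \<otimes> a [^] (j::nat)"
  shows "s = t \<otimes> a [^] (j - k)" "a [^] (j - k) \<in> S"
proof -
  have c: "s \<in> carrier G" "t \<in> carrier G" using assms S_closed by auto
  have "a [^] j = a [^] (j - k) \<otimes> a [^] k"
    using nat_pow_mult[OF a_closed, of "j - k" k] assms(3) by simp
  then have "s \<otimes> a [^] k = (t \<otimes> a [^] (j - k)) \<otimes> a [^] k" using assms c a_closed by (simp add: m_assoc)
  then show s: "s = t \<otimes> a [^] (j - k)" using c a_closed by simp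
  then have "a [^] (j - k) = inv t \<otimes> s" using c a_closed by simp
  then show "a [^] (j - k) \<in> S" using assms SG by (simp add: subgroup.m_closed subgroup.m_inv_closed)
qed

lemma index_dvd: assumes "a [^] (m::nat) \<in> S" shows "index dvd m"
proof -
  define q r where "q = m div index" and "r = m mod index"
  have "m = index * q + r" unfolding q_def r_def by simp
  then have "a [^] m = (a [^] index) [^] q \<otimes> a [^] r"
    using a_closed by (metis nat_pow_mult nat_pow_pow)
  then have "a [^] r = inv ((a [^] index) [^] q) \<otimes> a [^] m" using a_closed by simp
  moreover have "(a [^] index) [^] q \<in> S" using subgroup_nat_pow_closed[OF SG a_pow_index_in_S] .
  ultimately have "a [^] r \<in> S" using assms SG by (simp add: subgroup.m_closed subgroup.m_inv_closed)
  then have "\<not> 0 < r"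
    using not_less_Least[of r "\<lambda>k. 0 < k \<and> a [^] k \<in> S"] index_pos
    unfolding index_def r_def by auto
  then show ?thesis unfolding r_def by auto
qed

lemma inv_a_pow: "\<exists>m. inv (a [^] (k::nat)) = a [^] (m::nat)"
proof -
  have "a [^] (k * (ord a - 1)) \<otimes> a [^] k = a [^] (k * ord a)"
    using a_closed ord_ge_1[OF fin a_closed] by (simp add: nat_pow_mult algebra_simps)
  also have "\<dots> = (a [^] ord a) [^] k" using a_closed by (metis mult.commute nat_pow_pow)
  also have "\<dots> = \<one>" using a_closed pow_ord_eq_1 by simp
  finally show ?thesis using a_closed by (metis inv_equality nat_pow_closed)
qed

lemma conj_commutator_in_E: "t \<in> S \<Longrightarrow> inv t \<otimes> a [^] (k::nat) \<otimes> t \<otimes> inv (a [^] k) \<in> E"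
  using commutators_inD[OF comm, of "inv t" "a [^] k"] SB subgroup.m_inv_closed[OF BG] a_pow_in_B S_closed
  by auto

lemma adjoin_mult:
  assumes "s \<in> S" "t \<in> S"
  shows "(s \<otimes> a [^] (k::nat)) \<otimes> (t \<otimes> a [^] (j::nat)) =
    (s \<otimes> t \<otimes> (inv t \<otimes> a [^] k \<otimes> t \<otimes> inv (a [^] k))) \<otimes> a [^] (k + j)"
  using assms S_closed a_closed by (simp add: m_assoc nat_pow_mult[symmetric])

lemma adjoin_mult_closed:
  assumes "s \<in> S" "t \<in> S"
  shows "s \<otimes> t \<otimes> (inv t \<otimes> a [^] (k::nat) \<otimes> t \<otimes> inv (a [^] k)) \<in> S"
  using assms conj_commutator_in_E ES SG by (simp add: subgroup.m_closed subset_iff)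

lemma adjoin_subgroup: "subgroup (adjoin G S a) G"
proof (rule subgroupI)
  show "adjoin G S a \<subseteq> carrier G" unfolding adjoin_def using S_closed a_closed by auto
  have "\<one> \<otimes> a [^] (0::nat) \<in> adjoin G S a" unfolding adjoin_def using subgroup.one_closed[OF SG] by blast
  then show "adjoin G S a \<noteq> {}" by blast
next
  fix x assume "x \<in> adjoin G S a"
  then obtain s k where x: "x = s \<otimes> a [^] (k::nat)" "s \<in> S" unfolding adjoin_def by auto
  obtain m where m: "inv (a [^] k) = a [^] (m::nat)" using inv_a_pow by blast
  have sc: "s \<in> carrier G" using S_closed x(2) .
  \<comment> \<open>move \<open>inv s\<close> to the left of \<open>inv (a [^] k) = a [^] m\<close> at the cost of a commutator\<close>
  have "inv x = (inv s \<otimes> (s \<otimes> a [^] m \<otimes> inv s \<otimes> inv (a [^] m))) \<otimes> a [^] m"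
    using x sc a_closed m by (simp add: inv_mult_group m_assoc)
  moreover have "s \<otimes> a [^] m \<otimes> inv s \<otimes> inv (a [^] m) \<in> S"
    using commutators_inD[OF comm] x(2) SB a_pow_in_B ES by blast
  then have "inv s \<otimes> (s \<otimes> a [^] m \<otimes> inv s \<otimes> inv (a [^] m)) \<in> S"
    using x(2) SG by (simp add: subgroup.m_closed subgroup.m_inv_closed)
  ultimately show "inv x \<in> adjoin G S a" unfolding adjoin_def by blast
next
  fix x y assume "x \<in> adjoin G S a" "y \<in> adjoin G S a"
  then obtain s k t j where "x = s \<otimes> a [^] (k::nat)" "s \<in> S" "y = t \<otimes> a [^] (j::nat)" "t \<in> S"
    unfolding adjoin_def by auto
  then show "x \<otimes> y \<in> adjoin G S a"
    unfolding adjoin_def using adjoin_mult adjoin_mult_closed by blast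
qed

lemma S_subset_adjoin: "S \<subseteq> adjoin G S a"
proof
  fix s assume "s \<in> S" then have "s = s \<otimes> a [^] (0::nat)" using S_closed by simp
  then show "s \<in> adjoin G S a" using \<open>s \<in> S\<close> unfolding adjoin_def by blast
qed

lemma a_in_adjoin: "a \<in> adjoin G S a"
proof -
  have "a = \<one> \<otimes> a [^] (1::nat)" using a_closed by simp
  then show ?thesis unfolding adjoin_def using subgroup.one_closed[OF SG] by blast
qed

lemma adjoin_subset_B: "adjoin G S a \<subseteq> B"
  unfolding adjoin_def using SB a_pow_in_B BG by (auto simp: subgroup.m_closed)

lemma adjoin_normal_form:
  assumes "x \<in> adjoin G S a" obtains s k where "s \<in> S" "k < index" "x = s \<otimes> a [^] k"
proof -
  obtain s m where x: "x = s \<otimes> a [^] (m::nat)" "s \<in> S" using assms unfolding adjoin_def by auto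
  have "(a [^] index) [^] (m div index) \<otimes> a [^] (m mod index) = a [^] m"
    using a_closed by (simp add: nat_pow_mult nat_pow_pow)
  then have "x = (s \<otimes> (a [^] index) [^] (m div index)) \<otimes> a [^] (m mod index)"
    using x S_closed a_closed by (simp add: m_assoc del: nat_pow_mult)
  moreover have "s \<otimes> (a [^] index) [^] (m div index) \<in> S"
    using x(2) subgroup_nat_pow_closed[OF SG a_pow_index_in_S] SG by (simp add: subgroup.m_closed)
  ultimately show ?thesis using index_pos by (intro that[of _ "m mod index"]) auto
qed

lemma card_adjoin: "card (adjoin G S a) = index * card S"
proof -
  have exp_eq: "k = j"
    if "s \<in> S" "t \<in> S" "k \<le> j" "j < index" "s \<otimes> a [^] k = t \<otimes> a [^] j" for s t k j
  proof -
    have "index dvd j - k" using index_dvd a_pow_diff_in_S(2) that by blast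
    moreover have "j - k < index" using that by linarith
    ultimately show "k = j" using that(3) nat_dvd_not_less by fastforce
  qed
  have "inj_on (\<lambda>(s, k). s \<otimes> a [^] k) (S \<times> {..<index})"
  proof (rule inj_onI, clarify)
    fix s k t j assume st: "s \<in> S" "k < index" "t \<in> S" "j < index" "s \<otimes> a [^] k = t \<otimes> a [^] j"
    then have "k = j" using exp_eq[of s t k j] exp_eq[of t s j k] by (cases "k \<le> j") auto
    then show "s = t \<and> k = j" using st S_closed a_closed by simp
  qed
  moreover have "(\<lambda>(s, k). s \<otimes> a [^] k) ` (S \<times> {..<index}) = adjoin G S a"
  proof (intro equalityI subsetI)
    fix x assume "x \<in> adjoin G S a"
    then show "x \<in> (\<lambda>(s, k). s \<otimes> a [^] k) ` (S \<times> {..<index})"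
      by (rule adjoin_normal_form) force
  qed (auto simp: adjoin_def)
  ultimately have "card (adjoin G S a) = card (S \<times> {..<index})"
    by (metis card_image)
  then show ?thesis by (simp add: card_cartesian_product)
qed

end


definition char_restrict :: "'a set \<Rightarrow> ('a \<Rightarrow> complex) \<Rightarrow> 'a \<Rightarrow> complex" where
  "char_restrict S f = (\<lambda>x. if x \<in> S then f x else 1)"

context char_adjoin
begin

definition char_extend :: "('a \<Rightarrow> complex) \<Rightarrow> complex \<Rightarrow> 'a \<Rightarrow> complex" where
  "char_extend \<mu> \<omega> x = (if x \<in> adjoin G S a
     then (let p = (SOME p. fst p \<in> S \<and> x = fst p \<otimes> a [^] (snd p::nat)) in \<mu> (fst p) * \<omega> ^ snd p)
     else 1)"

context
  fixes \<mu> \<omega>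
  assumes \<mu>: "\<mu> \<in> chars_mod G S E" and \<omega>: "\<omega> ^ index = \<mu> (a [^] index)"
begin

lemma chars_mod_a_pow: assumes "a [^] (m::nat) \<in> S" shows "\<mu> (a [^] m) = \<omega> ^ m"
proof -
  obtain q where "m = index * q" using index_dvd[OF assms] by blast
  moreover have "\<mu> ((a [^] index) [^] q) = \<mu> (a [^] index) ^ q"
    using chars_mod_pow[OF SG one_E \<mu> a_pow_index_in_S] .
  ultimately show ?thesis using \<omega> a_closed by (simp add: nat_pow_pow power_mult)
qed

lemma char_extend_well_defined_aux:
  assumes "s \<in> S" "t \<in> S" "k \<le> j" "s \<otimes> a [^] (k::nat) = t \<otimes> a [^] (j::nat)"
  shows "\<mu> s * \<omega> ^ k = \<mu> t * \<omega> ^ j"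
proof -
  have "\<mu> s = \<mu> t * \<omega> ^ (j - k)"
    using a_pow_diff_in_S[OF assms] chars_modD(1)[OF \<mu>] chars_mod_a_pow assms(2) by simp
  then show ?thesis using assms(3) by (simp add: power_add[symmetric])
qed

lemma char_extend_well_defined:
  assumes "s \<in> S" "t \<in> S" "s \<otimes> a [^] (k::nat) = t \<otimes> a [^] (j::nat)"
  shows "\<mu> s * \<omega> ^ k = \<mu> t * \<omega> ^ j"
  using char_extend_well_defined_aux[of s t k j] char_extend_well_defined_aux[of t s j k] assms
  by (cases "k \<le> j") auto

lemma char_extend_eq: "s \<in> S \<Longrightarrow> char_extend \<mu> \<omega> (s \<otimes> a [^] (k::nat)) = \<mu> s * \<omega> ^ k"
proof -
  let ?P = "\<lambda>p. fst p \<in> S \<and> s \<otimes> a [^] k = fst p \<otimes> a [^] (snd p::nat)"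
  assume s: "s \<in> S"
  then have "s \<otimes> a [^] k \<in> adjoin G S a" unfolding adjoin_def by blast
  moreover have "?P (SOME p. ?P p)" using s by (intro someI[of ?P "(s, k)"]) simp
  ultimately show ?thesis
    unfolding char_extend_def Let_def
    using char_extend_well_defined[of "fst (SOME p. ?P p)" s "snd (SOME p. ?P p)" k] s by simp
qed

lemma char_extend_in_S: "s \<in> S \<Longrightarrow> char_extend \<mu> \<omega> s = \<mu> s"
  using char_extend_eq[of s 0] S_closed by simp

lemma char_extend_in_chars_mod: "char_extend \<mu> \<omega> \<in> chars_mod G (adjoin G S a) E"
  unfolding chars_mod_def
proof (intro CollectI conjI ballI allI impI)
  fix x y assume "x \<in> adjoin G S a" "y \<in> adjoin G S a"
  then obtain s k t j where x: "x = s \<otimes> a [^] (k::nat)" "s \<in> S" and y: "y = t \<otimes> a [^] (j::nat)" "t \<in> S"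
    unfolding adjoin_def by blast
  define c where "c = inv t \<otimes> a [^] k \<otimes> t \<otimes> inv (a [^] k)"
  have cE: "c \<in> E" unfolding c_def by (rule conj_commutator_in_E[OF y(2)])
  have "char_extend \<mu> \<omega> (x \<otimes> y) = \<mu> (s \<otimes> t \<otimes> c) * \<omega> ^ (k + j)"
    using adjoin_mult adjoin_mult_closed char_extend_eq x y unfolding c_def by simp
  also have "\<mu> (s \<otimes> t \<otimes> c) = \<mu> s * \<mu> t"
    using chars_modD[OF \<mu>] cE ES x y SG by (auto simp: subgroup.m_closed)
  finally show "char_extend \<mu> \<omega> (x \<otimes> y) = char_extend \<mu> \<omega> x * char_extend \<mu> \<omega> y"
    using char_extend_eq x y by (simp add: power_add)
next
  fix x assume "x \<in> E"
  then show "char_extend \<mu> \<omega> x = 1" using char_extend_in_S chars_modD(2)[OF \<mu>] ES by auto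
qed (simp add: char_extend_def)

lemma char_restrict_char_extend: "char_restrict S (char_extend \<mu> \<omega>) = \<mu>"
  using char_extend_in_S chars_modD(3)[OF \<mu>] unfolding char_restrict_def by auto

lemma char_extend_a: "char_extend \<mu> \<omega> a = \<omega>"
  using char_extend_eq[OF subgroup.one_closed[OF SG], of 1] chars_mod_one[OF SG one_E \<mu>] a_closed
  by simp

end

lemma char_restrict_in_chars_mod:
  assumes h: "h \<in> chars_mod G (adjoin G S a) E"
  shows "char_restrict S h \<in> chars_mod G S E" "h a ^ index = char_restrict S h (a [^] index)"
proof -
  show "char_restrict S h \<in> chars_mod G S E"
    using chars_modD[OF h] S_subset_adjoin ES SG unfolding chars_mod_def char_restrict_def
    by (auto simp: subgroup.m_closed subset_iff)
  show "h a ^ index = char_restrict S h (a [^] index)"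
    using chars_mod_pow[OF adjoin_subgroup one_E h a_in_adjoin] a_pow_index_in_S
    unfolding char_restrict_def by simp
qed

lemma chars_mod_adjoin_eqI:
  assumes h1: "h1 \<in> chars_mod G (adjoin G S a) E" and h2: "h2 \<in> chars_mod G (adjoin G S a) E"
    and "char_restrict S h1 = char_restrict S h2" and "h1 a = h2 a"
  shows "h1 = h2"
proof
  fix x show "h1 x = h2 x"
  proof (cases "x \<in> adjoin G S a")
    case True
    then obtain s k where x: "s \<in> S" "x = s \<otimes> a [^] (k::nat)" unfolding adjoin_def by blast
    have "h s = char_restrict S h s" "h x = h s * h a ^ k" if "h \<in> chars_mod G (adjoin G S a) E" for h
      using chars_modD(1)[OF that] chars_mod_pow[OF adjoin_subgroup one_E that a_in_adjoin] x
        S_subset_adjoin subgroup_nat_pow_closed[OF adjoin_subgroup a_in_adjoin]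
      unfolding char_restrict_def by auto
    then show ?thesis using assms by metis
  next
    case False then show ?thesis using chars_modD(3)[OF h1] chars_modD(3)[OF h2] by simp
  qed
qed

text \<open>Each character of \<open>S\<close> has exactly \<open>index\<close> extensions, one for each \<open>index\<close>-th root of its value at
  \<open>a [^] index\<close>.\<close>
lemma card_chars_mod_adjoin:
  assumes fin_S: "finite (chars_mod G S E)"
  shows "finite (chars_mod G (adjoin G S a) E)"
    and "card (chars_mod G (adjoin G S a) E) = index * card (chars_mod G S E)"
proof -
  let ?roots = "\<lambda>\<mu>. {\<omega>. \<omega> ^ index = \<mu> (a [^] index)}"
  let ?Sig = "SIGMA \<mu>:chars_mod G S E. ?roots \<mu>"
  have bij: "bij_betw (\<lambda>h. (char_restrict S h, h a)) (chars_mod G (adjoin G S a) E) ?Sig"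
  proof (rule bij_betwI')
    fix x y assume "x \<in> chars_mod G (adjoin G S a) E" "y \<in> chars_mod G (adjoin G S a) E"
    then show "((char_restrict S x, x a) = (char_restrict S y, y a)) = (x = y)"
      using chars_mod_adjoin_eqI by auto
  next
    fix x assume "x \<in> chars_mod G (adjoin G S a) E"
    then show "(char_restrict S x, x a) \<in> ?Sig" using char_restrict_in_chars_mod by auto
  next
    fix y assume "y \<in> ?Sig"
    then obtain \<mu> \<omega> where "y = (\<mu>, \<omega>)" "\<mu> \<in> chars_mod G S E" "\<omega> ^ index = \<mu> (a [^] index)" by blast
    then show "\<exists>x\<in>chars_mod G (adjoin G S a) E. y = (char_restrict S x, x a)"
      using char_extend_in_chars_mod char_restrict_char_extend char_extend_a by metis
  qed
  have card_roots: "card (?roots \<mu>) = index" if "\<mu> \<in> chars_mod G S E" for \<mu>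
    using card_nth_roots[OF chars_mod_nonzero[OF SG one_E that] index_pos] .
  have fin_roots: "finite (?roots \<mu>)" if "\<mu> \<in> chars_mod G S E" for \<mu>
    using card_roots[OF that] index_pos by (metis card.infinite less_irrefl)
  have "finite ?Sig" using fin_S fin_roots by (intro finite_SigmaI) auto
  then show "finite (chars_mod G (adjoin G S a) E)" using bij_betw_finite[OF bij] by simp
  have "card (chars_mod G (adjoin G S a) E) = card ?Sig" using bij_betw_same_card[OF bij] .
  also have "\<dots> = (\<Sum>\<mu>\<in>chars_mod G S E. index)" using fin_S fin_roots card_roots by (simp add: card_SigmaI)
  finally show "card (chars_mod G (adjoin G S a) E) = index * card (chars_mod G S E)" by simp
qed

end

context group
begin

text \<open>Duality for the abelian quotient \<open>S/E\<close>: building \<open>S\<close> from \<open>E\<close> by adjoining one element at a time,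
  characters and elements multiply by the same index at each step.\<close>
lemma card_chars_mod:
  assumes fin: "finite (carrier G)" and SG: "subgroup S G" and EG: "subgroup E G"
    and ES: "E \<subseteq> S" and comm: "commutators_in G S E"
  shows "finite (chars_mod G S E)" and "card (chars_mod G S E) * card E = card S"
proof -
  define F where "F xs = foldr (\<lambda>a T. adjoin G T a) xs E" for xs
  have "subgroup (F xs) G \<and> E \<subseteq> F xs \<and> F xs \<subseteq> S \<and> set xs \<subseteq> F xs \<and>
      finite (chars_mod G (F xs) E) \<and> card (chars_mod G (F xs) E) * card E = card (F xs)"
    if "set xs \<subseteq> S" for xs
    using that
  proof (induction xs)
    case Nil
    then show ?case using EG ES unfolding F_def by (simp add: chars_mod_self)
  next
    case (Cons a xs)
    then have IH: "subgroup (F xs) G" "E \<subseteq> F xs" "F xs \<subseteq> S" "set xs \<subseteq> F xs"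
      "finite (chars_mod G (F xs) E)" "card (chars_mod G (F xs) E) * card E = card (F xs)" "a \<in> S"
      by auto
    interpret X: char_adjoin G "F xs" E S a
      by (intro char_adjoin.intro char_adjoin_axioms.intro is_group) (use fin IH EG SG comm in auto)
    have "F (a # xs) = adjoin G (F xs) a" unfolding F_def by simp
    then show ?case
      using X.adjoin_subgroup X.S_subset_adjoin X.adjoin_subset_B X.a_in_adjoin IH
        X.card_chars_mod_adjoin[OF IH(5)] X.card_adjoin
      by auto
  qed
  note adjoin_all = this
  obtain xs where xs: "set xs = S"
    using finite_list finite_subset[OF subgroup.subset[OF SG] fin] by blast
  then have "F xs = S" using adjoin_all[of xs] by auto
  then show "finite (chars_mod G S E)" "card (chars_mod G S E) * card E = card S"
    using adjoin_all[of xs] xs by auto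
qed

lemma exists_chars_mod_ne_1:
  assumes fin: "finite (carrier G)" and SG: "subgroup S G" and EG: "subgroup E G"
    and ES: "E \<subseteq> S" and comm: "commutators_in G S E" and x: "x \<in> S" "x \<notin> E"
  shows "\<exists>h\<in>chars_mod G S E. h x \<noteq> 1"
proof (rule ccontr)
  interpret X: char_adjoin G E E S x
    by (intro char_adjoin.intro char_adjoin_axioms.intro is_group) (use assms in auto)
  let ?Ex = "adjoin G E x"
  assume "\<not> ?thesis"
  then have trivial_at_x: "h x = 1" if "h \<in> chars_mod G S E" for h using that by blast
  \<comment> \<open>then every character trivial on \<open>E\<close> is trivial on \<open>?Ex\<close>, contradicting the duality count\<close>
  have "h \<in> chars_mod G S ?Ex" if h: "h \<in> chars_mod G S E" for h
  proof -
    have "h (e \<otimes> x [^] k) = 1" if "e \<in> E" for e and k :: nat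
      using chars_modD[OF h] chars_mod_pow[OF SG X.one_E h x(1)] trivial_at_x[OF h] that ES
        subgroup_nat_pow_closed[OF SG x(1)] by auto
    then show ?thesis using h unfolding chars_mod_def adjoin_def by blast
  qed
  then have eq: "chars_mod G S E = chars_mod G S ?Ex"
    using chars_mod_antimono[OF X.S_subset_adjoin] by blast
  have comm': "commutators_in G S ?Ex" using comm X.S_subset_adjoin unfolding commutators_in_def by blast
  have fin_S: "finite S" using finite_subset[OF subgroup.subset[OF SG] fin] .
  have "card E < card ?Ex"
    using X.S_subset_adjoin X.a_in_adjoin x(2) finite_subset[OF X.adjoin_subset_B fin_S]
    by (intro psubset_card_mono) auto
  moreover have "card (chars_mod G S E) * card E = card S"
    and "card (chars_mod G S ?Ex) * card ?Ex = card S"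
    using card_chars_mod(2)[OF fin SG EG ES comm]
      card_chars_mod(2)[OF fin SG X.adjoin_subgroup X.adjoin_subset_B comm'] .
  moreover have "card S > 0" using fin_S subgroup.one_closed[OF SG] card_gt_0_iff by blast
  ultimately show False unfolding eq by (metis mult_less_cancel1 nat_less_le nat_neq_iff mult_is_0)
qed

lemma sum_chars_mod:
  assumes fin: "finite (carrier G)" and SG: "subgroup S G" and EG: "subgroup E G"
    and ES: "E \<subseteq> S" and comm: "commutators_in G S E" and x: "x \<in> S"
  shows "(\<Sum>h\<in>chars_mod G S E. h x) = (if x \<in> E then of_nat (card (chars_mod G S E)) else 0)"
proof (cases "x \<in> E")
  case True
  then have "(\<Sum>h\<in>chars_mod G S E. h x) = (\<Sum>h\<in>chars_mod G S E. 1)"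
    using chars_modD(2) by (intro sum.cong) auto
  then show ?thesis using True by simp
next
  case False
  then obtain h0 where h0: "h0 \<in> chars_mod G S E" "h0 x \<noteq> 1"
    using exists_chars_mod_ne_1[OF assms] by blast
  have nz: "h0 y \<noteq> 0" for y using chars_mod_nonzero[OF SG subgroup.one_closed[OF EG] h0(1)] .
  have "bij_betw (\<lambda>h y. h y * h0 y) (chars_mod G S E) (chars_mod G S E)"
    by (rule bij_betwI[where g = "\<lambda>h y. h y / h0 y"])
      (use chars_mod_mult chars_mod_divide h0(1) nz in auto)
  then have "(\<Sum>h\<in>chars_mod G S E. h x) = 0"
    by (rule sum_eq_0_if_reindex_scales[OF _ _ h0(2)]) simp
  then show ?thesis using False by simp
qed

end

definition zero_ext :: "'a set \<Rightarrow> ('a \<Rightarrow> complex) \<Rightarrow> 'a \<Rightarrow> complex" where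
  "zero_ext H chi w = (if w \<in> H then chi w else 0)"

lemma induced_eq_sum_zero_ext:
  "induced G H chi g = (\<Sum>x\<in>carrier G. zero_ext H chi (x \<otimes>\<^bsub>G\<^esub> g \<otimes>\<^bsub>G\<^esub> inv\<^bsub>G\<^esub> x)) / of_nat (card H)"
  unfolding induced_def zero_ext_def by simp

lemma (in group) conj_notin_subgroup:
  assumes "subgroup K G" "c \<in> K" "w \<in> carrier G" "w \<notin> K"
  shows "c \<otimes> w \<otimes> inv c \<notin> K"
proof
  assume "c \<otimes> w \<otimes> inv c \<in> K"
  then have "inv c \<otimes> (c \<otimes> w \<otimes> inv c) \<otimes> c \<in> K"
    using assms(1,2) by (simp add: subgroup.m_closed subgroup.m_inv_closed)
  moreover have "inv c \<otimes> (c \<otimes> w \<otimes> inv c) \<otimes> c = w"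
    using assms subgroup.mem_carrier[OF assms(1,2)] by (simp add: m_assoc)
  ultimately show False using assms(4) by simp
qed

text \<open>One step of the descent: \<open>L\<close> is a subgroup and \<open>B\<close> a normal subgroup whose commutators lie in
  \<open>L\<close>, so \<open>B/D\<close> with \<open>D = B \<inter> L\<close> is abelian. The characters of \<open>B\<close> trivial on \<open>D\<close> are permuted by
  conjugation under \<open>L\<close>; each such \<open>f\<close> extends to a linear character of its inertia group
  \<open>stab f <#> B\<close>, and \<open>Ind_L^G 1\<close> is the sum, over the \<open>L\<close>-orbits, of the characters induced from
  these extensions. The trivial orbit contributes \<open>Ind_LB^G 1\<close>.\<close>
locale clifford_step = group G for G (structure) +
  fixes L B
  assumes fin: "finite (carrier G)" and LG: "subgroup L G" and BN: "B \<lhd> G"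
    and comm: "commutators_in G B L"
begin

definition D :: "'a set" where "D = B \<inter> L"
definition chars_B :: "('a \<Rightarrow> complex) set" where "chars_B = chars_mod G B D"
definition conj_char :: "'a \<Rightarrow> ('a \<Rightarrow> complex) \<Rightarrow> 'a \<Rightarrow> complex" where
  "conj_char l f = (\<lambda>c. if c \<in> B then f (inv l \<otimes> c \<otimes> l) else 1)"
definition stab :: "('a \<Rightarrow> complex) \<Rightarrow> 'a set" where "stab f = {l \<in> L. conj_char l f = f}"
definition inertia :: "('a \<Rightarrow> complex) \<Rightarrow> 'a set" where "inertia f = stab f <#> B"
definition inertia_char :: "('a \<Rightarrow> complex) \<Rightarrow> 'a \<Rightarrow> complex" where
  "inertia_char f t = f (SOME b. b \<in> B \<and> (\<exists>l\<in>stab f. t = l \<otimes> b))"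
definition LB :: "'a set" where "LB = L <#> B"

lemma BG: "subgroup B G" using BN normal_imp_subgroup by blast
lemma B_closed: "x \<in> B \<Longrightarrow> x \<in> carrier G" by (rule subgroup.mem_carrier[OF BG])
lemma L_closed: "x \<in> L \<Longrightarrow> x \<in> carrier G" by (rule subgroup.mem_carrier[OF LG])
lemma DG: "subgroup D G" unfolding D_def using subgroups_Inter_pair BG LG by blast
lemma one_D: "\<one> \<in> D" using subgroup.one_closed[OF DG] .
lemma finite_B: "finite B" using fin BG subgroup.subset finite_subset by blast
lemma finite_L: "finite L" using fin LG subgroup.subset finite_subset by blast
lemma card_B_pos: "card B > 0" using finite_B subgroup.one_closed[OF BG] card_gt_0_iff by blast
lemma card_L_pos: "card L > 0" using finite_L subgroup.one_closed[OF LG] card_gt_0_iff by blast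
lemma card_D_pos: "card D > 0"
  using finite_subset[OF _ finite_B] one_D card_gt_0_iff unfolding D_def by blast

lemma commutators_B_in_D: "commutators_in G B D"
  using commutators_inD[OF comm] BG
  unfolding commutators_in_def D_def by (auto simp: subgroup.m_closed subgroup.m_inv_closed)

lemma conj_in_B: "l \<in> carrier G \<Longrightarrow> b \<in> B \<Longrightarrow> inv l \<otimes> b \<otimes> l \<in> B"
  using normal.inv_op_closed1[OF BN] by blast

lemma conj_in_D: assumes "l \<in> L" "d \<in> D" shows "inv l \<otimes> d \<otimes> l \<in> D"
  using conj_in_B[OF L_closed] assms LG
  unfolding D_def by (auto simp: subgroup.m_closed subgroup.m_inv_closed)

lemma finite_chars_B: "finite chars_B"
  and card_chars_B: "card chars_B * card D = card B"
  using card_chars_mod[OF fin BG DG _ commutators_B_in_D] unfolding chars_B_def D_def by auto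

lemma sum_chars_B: "x \<in> B \<Longrightarrow> (\<Sum>f\<in>chars_B. f x) = (if x \<in> D then of_nat (card chars_B) else 0)"
  using sum_chars_mod[OF fin BG DG _ commutators_B_in_D] unfolding chars_B_def D_def by auto

lemma conj_char_mult:
  assumes "l1 \<in> carrier G" "l2 \<in> carrier G"
  shows "conj_char (l1 \<otimes> l2) f = conj_char l1 (conj_char l2 f)"
proof
  fix c show "conj_char (l1 \<otimes> l2) f c = conj_char l1 (conj_char l2 f) c"
  proof (cases "c \<in> B")
    case True
    have "inv (l1 \<otimes> l2) \<otimes> c \<otimes> (l1 \<otimes> l2) = inv l2 \<otimes> (inv l1 \<otimes> c \<otimes> l1) \<otimes> l2"
      using assms B_closed[OF True] by (simp add: inv_mult_group m_assoc)
    then show ?thesis unfolding conj_char_def using True conj_in_B[OF assms(1)] by simp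
  qed (simp add: conj_char_def)
qed

context
  fixes f assumes f: "f \<in> chars_B"
begin

lemma chars_B_mult: "x \<in> B \<Longrightarrow> y \<in> B \<Longrightarrow> f (x \<otimes> y) = f x * f y"
  and chars_B_D: "d \<in> D \<Longrightarrow> f d = 1"
  and chars_B_outside: "x \<notin> B \<Longrightarrow> f x = 1"
  using chars_modD[of f B D] f unfolding chars_B_def by auto

lemma chars_B_nonzero: "f x \<noteq> 0"
  using chars_mod_nonzero[OF BG one_D] f unfolding chars_B_def by blast

lemma chars_B_inv: "x \<in> B \<Longrightarrow> f (inv x) = 1 / f x"
  using chars_mod_inv[OF BG one_D] f unfolding chars_B_def by blast

lemma conj_char_in_chars_B: assumes l: "l \<in> L" shows "conj_char l f \<in> chars_B"
  unfolding chars_B_def chars_mod_def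
proof (intro CollectI conjI ballI allI impI)
  fix x y assume xy: "x \<in> B" "y \<in> B"
  have "inv l \<otimes> (x \<otimes> y) \<otimes> l = (inv l \<otimes> x \<otimes> l) \<otimes> (inv l \<otimes> y \<otimes> l)"
    using L_closed[OF l] xy B_closed by (simp add: m_assoc)
  then show "conj_char l f (x \<otimes> y) = conj_char l f x * conj_char l f y"
    unfolding conj_char_def using xy conj_in_B[OF L_closed[OF l]] BG
    by (simp add: subgroup.m_closed chars_B_mult)
qed (use conj_in_D[OF l] chars_B_D in \<open>auto simp: conj_char_def D_def\<close>)

lemma conj_char_one: "conj_char \<one> f = f"
  using chars_B_outside B_closed by (auto simp: conj_char_def)

lemma stab_subgroup: "subgroup (stab f) G"
proof (rule subgroupI)
  show "stab f \<subseteq> carrier G" using L_closed unfolding stab_def by blast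
  show "stab f \<noteq> {}" unfolding stab_def using subgroup.one_closed[OF LG] conj_char_one by blast
next
  fix l assume "l \<in> stab f"
  then have l: "l \<in> L" "conj_char l f = f" unfolding stab_def by auto
  have "conj_char (inv l) f = conj_char (inv l \<otimes> l) f"
    using conj_char_mult L_closed[OF l(1)] l(2) by (metis inv_closed)
  then show "inv l \<in> stab f"
    unfolding stab_def using l LG L_closed conj_char_one by (simp add: subgroup.m_inv_closed)
next
  fix l1 l2 assume "l1 \<in> stab f" "l2 \<in> stab f"
  then show "l1 \<otimes> l2 \<in> stab f"
    unfolding stab_def using conj_char_mult L_closed LG by (simp add: subgroup.m_closed)
qed

lemma stab_subset_L: "stab f \<subseteq> L" unfolding stab_def by blast

lemma D_subset_stab: "D \<subseteq> stab f"
proof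
  fix d assume d: "d \<in> D"
  then have dB: "d \<in> B" and dc: "d \<in> carrier G" unfolding D_def using B_closed by auto
  have "f (inv d \<otimes> c \<otimes> d) = f c" if c: "c \<in> B" for c
  proof -
    have k: "inv d \<otimes> c \<otimes> inv (inv d) \<otimes> inv c \<in> D"
      using commutators_inD[OF commutators_B_in_D subgroup.m_inv_closed[OF BG dB] c] .
    then have "inv d \<otimes> c \<otimes> inv (inv d) \<otimes> inv c \<in> B" unfolding D_def by blast
    moreover have "inv d \<otimes> c \<otimes> d = (inv d \<otimes> c \<otimes> inv (inv d) \<otimes> inv c) \<otimes> c"
      using dc B_closed[OF c] by (simp add: m_assoc)
    ultimately show ?thesis using chars_B_mult c chars_B_D[OF k] by simp
  qed
  then have "conj_char d f = f" using chars_B_outside by (auto simp: conj_char_def)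
  then show "d \<in> stab f" unfolding stab_def using d D_def by blast
qed

lemma stab_Int_B: "stab f \<inter> B = D"
  using D_subset_stab stab_subset_L unfolding D_def by blast

lemma inertia_subgroup: "subgroup (inertia f) G"
  unfolding inertia_def using set_mult_normal_subgroup[OF stab_subgroup BN] .

lemma card_inertia: "card (inertia f) * card D = card (stab f) * card B"
  using card_set_mult_mult_card_Int[OF fin stab_subgroup BG] stab_Int_B unfolding inertia_def by simp

lemma inertia_factor_in_D:
  assumes "l \<in> L" "b \<in> B" "l0 \<in> L" "b0 \<in> B" "l \<otimes> b = l0 \<otimes> b0"
  shows "inv l0 \<otimes> l \<in> D" "(inv l0 \<otimes> l) \<otimes> b = b0"
proof -
  have c: "l \<in> carrier G" "b \<in> carrier G" "l0 \<in> carrier G" "b0 \<in> carrier G"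
    using assms L_closed B_closed by auto
  show eq: "(inv l0 \<otimes> l) \<otimes> b = b0" using assms(5) c by (simp add: m_assoc)
  then have "inv l0 \<otimes> l = b0 \<otimes> inv b" using c by (simp add: inv_solve_right)
  then have "inv l0 \<otimes> l \<in> B" using assms BG by (simp add: subgroup.m_closed subgroup.m_inv_closed)
  moreover have "inv l0 \<otimes> l \<in> L" using assms LG by (simp add: subgroup.m_closed subgroup.m_inv_closed)
  ultimately show "inv l0 \<otimes> l \<in> D" unfolding D_def by blast
qed

lemma mem_inertia_iff:
  assumes l: "l \<in> L" and b: "b \<in> B"
  shows "l \<otimes> b \<in> inertia f \<longleftrightarrow> l \<in> stab f"
proof
  assume "l \<otimes> b \<in> inertia f"
  then obtain l0 b0 where lb: "l0 \<in> stab f" "b0 \<in> B" "l \<otimes> b = l0 \<otimes> b0"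
    unfolding inertia_def set_mult_def by blast
  have "inv l0 \<otimes> l \<in> stab f"
    using inertia_factor_in_D(1)[OF l b _ lb(2,3)] lb(1) stab_subset_L D_subset_stab by blast
  then have "l0 \<otimes> (inv l0 \<otimes> l) \<in> stab f" using subgroup.m_closed[OF stab_subgroup lb(1)] by blast
  then show "l \<in> stab f" using lb(1) stab_subset_L L_closed l by auto
qed (use b in \<open>auto simp: inertia_def set_mult_def\<close>)

lemma inertia_char_eq:
  assumes l: "l \<in> stab f" and b: "b \<in> B"
  shows "inertia_char f (l \<otimes> b) = f b"
proof -
  let ?P = "\<lambda>b0. b0 \<in> B \<and> (\<exists>l0\<in>stab f. l \<otimes> b = l0 \<otimes> b0)"
  have "?P (SOME b0. ?P b0)" using l b by (intro someI[of ?P b]) blast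
  then obtain l0 where lb: "l0 \<in> stab f" "(SOME b0. ?P b0) \<in> B" "l \<otimes> b = l0 \<otimes> (SOME b0. ?P b0)"
    by blast
  have "l \<in> L" "l0 \<in> L" using l lb(1) stab_subset_L by auto
  note in_D = inertia_factor_in_D[OF this(1) b this(2) lb(2,3)]
  have "inertia_char f (l \<otimes> b) = f ((inv l0 \<otimes> l) \<otimes> b)"
    unfolding inertia_char_def in_D(2) ..
  also have "\<dots> = f b"
    using chars_B_mult chars_B_D in_D(1) l lb(1) stab_subset_L b unfolding D_def by auto
  finally show ?thesis .
qed

lemma linear_char_inertia_char: "linear_char G (inertia f) (inertia_char f)"
  unfolding linear_char_def
proof (intro conjI ballI)
  fix x assume "x \<in> inertia f"
  then obtain l b where "l \<in> stab f" "b \<in> B" "x = l \<otimes> b" unfolding inertia_def set_mult_def by blast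
  then show "inertia_char f x \<noteq> 0" using inertia_char_eq chars_B_nonzero by simp
next
  fix x y assume "x \<in> inertia f" "y \<in> inertia f"
  then obtain l1 b1 l2 b2 where lb: "l1 \<in> stab f" "b1 \<in> B" "x = l1 \<otimes> b1"
    "l2 \<in> stab f" "b2 \<in> B" "y = l2 \<otimes> b2" unfolding inertia_def set_mult_def by blast
  have c: "l1 \<in> carrier G" "b1 \<in> carrier G" "l2 \<in> carrier G" "b2 \<in> carrier G"
    using lb stab_subset_L L_closed B_closed by auto
  have cb: "inv l2 \<otimes> b1 \<otimes> l2 \<in> B" using conj_in_B c lb by blast
  \<comment> \<open>move \<open>b1\<close> past \<open>l2\<close>; since \<open>l2\<close> stabilises \<open>f\<close>, the conjugate has the same value\<close>
  have "x \<otimes> y = (l1 \<otimes> l2) \<otimes> ((inv l2 \<otimes> b1 \<otimes> l2) \<otimes> b2)" using lb c by (simp add: m_assoc)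
  moreover have "l1 \<otimes> l2 \<in> stab f" using lb stab_subgroup by (simp add: subgroup.m_closed)
  moreover have "f (inv l2 \<otimes> b1 \<otimes> l2) = f b1"
    using lb(2,4) fun_cong[of "conj_char l2 f" f b1] unfolding stab_def conj_char_def by auto
  ultimately show "inertia_char f (x \<otimes> y) = inertia_char f x * inertia_char f y"
    using inertia_char_eq chars_B_mult cb lb BG by (simp add: subgroup.m_closed)
qed

lemma zero_ext_inertia_mult:
  assumes "l \<in> L" "b \<in> B"
  shows "zero_ext (inertia f) (inertia_char f) (l \<otimes> b) = (if l \<in> stab f then f b else 0)"
  unfolding zero_ext_def using mem_inertia_iff[OF assms] inertia_char_eq[OF _ assms(2)] by simp

lemma sum_conj_char_ratio:
  assumes l: "l \<in> L"
  shows "(\<Sum>c\<in>B. f (inv l \<otimes> c \<otimes> l) * f (inv c)) = (if l \<in> stab f then of_nat (card B) else 0)"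
proof (cases "l \<in> stab f")
  case True
  then have "f (inv l \<otimes> c \<otimes> l) = f c" if "c \<in> B" for c
    using that fun_cong[of "conj_char l f" f c] unfolding stab_def conj_char_def by auto
  then have "(\<Sum>c\<in>B. f (inv l \<otimes> c \<otimes> l) * f (inv c)) = (\<Sum>c\<in>B. 1)"
    using chars_B_inv chars_B_nonzero by (intro sum.cong) auto
  then show ?thesis using True by simp
next
  case False
  have lc: "l \<in> carrier G" using L_closed l .
  \<comment> \<open>the summand is a homomorphism on \<open>B\<close>, nontrivial since \<open>l\<close> moves \<open>f\<close>\<close>
  have hom: "f (inv l \<otimes> (x \<otimes> y) \<otimes> l) * f (inv (x \<otimes> y)) =
      f (inv l \<otimes> x \<otimes> l) * f (inv x) * (f (inv l \<otimes> y \<otimes> l) * f (inv y))"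
    if xy: "x \<in> B" "y \<in> B" for x y
  proof -
    have xc: "x \<in> carrier G" "y \<in> carrier G" using xy B_closed by auto
    have "inv l \<otimes> (x \<otimes> y) \<otimes> l = (inv l \<otimes> x \<otimes> l) \<otimes> (inv l \<otimes> y \<otimes> l)"
      using lc xc by (simp add: m_assoc)
    moreover have "inv (x \<otimes> y) = inv y \<otimes> inv x" using xc by (simp add: inv_mult_group)
    ultimately show ?thesis
      using chars_B_mult conj_in_B[OF lc] xy subgroup.m_inv_closed[OF BG] by simp
  qed
  obtain c0 where c0: "c0 \<in> B" "f (inv l \<otimes> c0 \<otimes> l) \<noteq> f c0"
  proof (rule ccontr)
    assume "\<not> thesis"
    then have "conj_char l f = f" using that chars_B_outside unfolding conj_char_def by fastforce
    then show False using False l unfolding stab_def by blast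
  qed
  then have "f (inv l \<otimes> c0 \<otimes> l) * f (inv c0) \<noteq> 1"
    using chars_B_inv[OF c0(1)] chars_B_nonzero[of c0] by simp
  then show ?thesis
    using sum_hom_eq_0[OF BG hom c0(1)] False by simp
qed

end

lemma LB_subgroup: "subgroup LB G"
  unfolding LB_def using set_mult_normal_subgroup[OF LG BN] .

lemma L_subset_LB: "L \<subseteq> LB"
  unfolding LB_def set_mult_def using subgroup.one_closed[OF BG] L_closed by force

lemma B_subset_LB: "B \<subseteq> LB"
  unfolding LB_def set_mult_def using subgroup.one_closed[OF LG] B_closed by force

lemma inertia_subset_LB: "inertia f \<subseteq> LB"
  unfolding inertia_def LB_def stab_def by (rule mono_set_mult) auto

definition conj_avg :: "('a \<Rightarrow> complex) \<Rightarrow> 'a \<Rightarrow> complex" where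
  "conj_avg F w = (\<Sum>c\<in>B. F (c \<otimes> w \<otimes> inv c))"

lemma conj_avg_zero_ext_outside_LB:
  assumes "H \<subseteq> LB" "w \<in> carrier G" "w \<notin> LB"
  shows "conj_avg (zero_ext H chi) w = 0"
  unfolding conj_avg_def zero_ext_def
  using conj_notin_subgroup[OF LB_subgroup _ assms(2,3)] B_subset_LB assms(1)
  by (intro sum.neutral) auto

context
  fixes l b assumes l: "l \<in> L" and b: "b \<in> B"
begin

lemma conj_mult_eq:
  assumes c: "c \<in> B"
  shows "c \<otimes> (l \<otimes> b) \<otimes> inv c = l \<otimes> (inv l \<otimes> c \<otimes> l \<otimes> b \<otimes> inv c)"
    and "inv l \<otimes> c \<otimes> l \<otimes> b \<otimes> inv c \<in> B"
proof -
  show "c \<otimes> (l \<otimes> b) \<otimes> inv c = l \<otimes> (inv l \<otimes> c \<otimes> l \<otimes> b \<otimes> inv c)"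
    using l b c L_closed B_closed by (simp add: m_assoc)
  show "inv l \<otimes> c \<otimes> l \<otimes> b \<otimes> inv c \<in> B"
    using conj_in_B[OF L_closed[OF l] c] b c BG by (simp add: subgroup.m_closed subgroup.m_inv_closed)
qed

lemma zero_ext_L_mult:
  assumes "\<beta> \<in> B"
  shows "zero_ext L trivial_char (l \<otimes> \<beta>) = (if \<beta> \<in> D then 1 else 0)"
proof -
  have "l \<otimes> \<beta> \<in> L \<longleftrightarrow> \<beta> \<in> L"
    using l LG L_closed B_closed[OF assms]
    by (metis inv_m_cancel_left subgroup.m_closed subgroup.m_inv_closed)
  then show ?thesis unfolding zero_ext_def trivial_char_def D_def using assms by auto
qed

lemma chars_B_conj_mult:
  assumes f: "f \<in> chars_B" and c: "c \<in> B"
  shows "f (inv l \<otimes> c \<otimes> l \<otimes> b \<otimes> inv c) = f b * (f (inv l \<otimes> c \<otimes> l) * f (inv c))"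
  using chars_B_mult[OF f] conj_in_B[OF L_closed[OF l] c] b c BG
  by (simp add: subgroup.m_closed subgroup.m_inv_closed)

lemma zero_ext_inertia_conj_mult:
  assumes f: "f \<in> chars_B" and c: "c \<in> B"
  shows "zero_ext (inertia f) (inertia_char f) (c \<otimes> (l \<otimes> b) \<otimes> inv c) = (if l \<in> stab f then f b else 0)"
proof -
  have "f (inv l \<otimes> c \<otimes> l \<otimes> b \<otimes> inv c) = f b" if "l \<in> stab f"
  proof -
    have "f (inv l \<otimes> c \<otimes> l) = f c"
      using that c fun_cong[of "conj_char l f" f c] unfolding stab_def conj_char_def by auto
    then show ?thesis
      using chars_B_conj_mult[OF f c] chars_B_inv[OF f c] chars_B_nonzero[OF f, of c] by simp
  qed
  then show ?thesis
    using conj_mult_eq[OF c] zero_ext_inertia_mult[OF f l conj_mult_eq(2)[OF c]] by simp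
qed

text \<open>Character orthogonality on \<open>B/D\<close> detects membership in \<open>D\<close>; summing it against the twisted
  ratio of \<open>sum_conj_char_ratio\<close> matches the two sides.\<close>
lemma conj_avg_mult:
  "of_nat (card B) * conj_avg (zero_ext L trivial_char) (l \<otimes> b) =
    of_nat (card D) * (\<Sum>f\<in>chars_B. conj_avg (zero_ext (inertia f) (inertia_char f)) (l \<otimes> b))"
proof -
  let ?\<beta> = "\<lambda>c. inv l \<otimes> c \<otimes> l \<otimes> b \<otimes> inv c"
  define Q where "Q = (\<Sum>f\<in>chars_B. if l \<in> stab f then f b else 0)"
  have "conj_avg (zero_ext (inertia f) (inertia_char f)) (l \<otimes> b) =
      (\<Sum>c\<in>B. if l \<in> stab f then f b else 0)" if f: "f \<in> chars_B" for f
    unfolding conj_avg_def using zero_ext_inertia_conj_mult[OF f] by (intro sum.cong) auto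
  then have rhs: "(\<Sum>f\<in>chars_B. conj_avg (zero_ext (inertia f) (inertia_char f)) (l \<otimes> b)) =
      of_nat (card B) * Q"
    unfolding Q_def by (simp add: sum_distrib_left)
  have "of_nat (card chars_B) * conj_avg (zero_ext L trivial_char) (l \<otimes> b) =
      (\<Sum>c\<in>B. of_nat (card chars_B) * (if ?\<beta> c \<in> D then 1 else 0))"
    unfolding conj_avg_def sum_distrib_left using conj_mult_eq zero_ext_L_mult by (intro sum.cong) auto
  also have "\<dots> = (\<Sum>c\<in>B. \<Sum>f\<in>chars_B. f (?\<beta> c))"
    using sum_chars_B conj_mult_eq(2) by (intro sum.cong) auto
  also have "\<dots> = (\<Sum>f\<in>chars_B. f b * (\<Sum>c\<in>B. f (inv l \<otimes> c \<otimes> l) * f (inv c)))"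
    using chars_B_conj_mult by (subst sum.swap) (simp add: sum_distrib_left)
  also have "\<dots> = (\<Sum>f\<in>chars_B. f b * (if l \<in> stab f then of_nat (card B) else 0))"
    using sum_conj_char_ratio l by simp
  also have "\<dots> = of_nat (card B) * Q"
    unfolding Q_def sum_distrib_left by (intro sum.cong) auto
  finally have lhs: "of_nat (card chars_B) * conj_avg (zero_ext L trivial_char) (l \<otimes> b) =
      of_nat (card B) * Q" .
  show ?thesis
  proof -
    have "of_nat (card B) * conj_avg (zero_ext L trivial_char) (l \<otimes> b) =
        of_nat (card D) * (of_nat (card chars_B) * conj_avg (zero_ext L trivial_char) (l \<otimes> b))"
      using card_chars_B by (simp flip: of_nat_mult add: mult.commute)
    then show ?thesis using rhs lhs by simp
  qed
qed

end

lemma conj_avg_eq: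
  assumes w: "w \<in> carrier G"
  shows "of_nat (card B) * conj_avg (zero_ext L trivial_char) w =
    of_nat (card D) * (\<Sum>f\<in>chars_B. conj_avg (zero_ext (inertia f) (inertia_char f)) w)"
proof (cases "w \<in> LB")
  case True
  then obtain l b where "l \<in> L" "b \<in> B" "w = l \<otimes> b" unfolding LB_def set_mult_def by blast
  then show ?thesis using conj_avg_mult by simp
qed (use conj_avg_zero_ext_outside_LB[OF _ w] L_subset_LB inertia_subset_LB in simp)

lemma sum_conjugates_zero_ext_L:
  assumes g: "g \<in> carrier G"
  shows "of_nat (card B) * (\<Sum>x\<in>carrier G. zero_ext L trivial_char (x \<otimes> g \<otimes> inv x)) =
    of_nat (card D) * (\<Sum>f\<in>chars_B. \<Sum>x\<in>carrier G. zero_ext (inertia f) (inertia_char f) (x \<otimes> g \<otimes> inv x))"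
proof -
  have "of_nat (card B) * (of_nat (card B) * (\<Sum>x\<in>carrier G. zero_ext L trivial_char (x \<otimes> g \<otimes> inv x))) =
      (\<Sum>x\<in>carrier G. of_nat (card B) * conj_avg (zero_ext L trivial_char) (x \<otimes> g \<otimes> inv x))"
    unfolding conj_avg_def sum_conjugates_average[OF subgroup.subset[OF BG] g]
    by (simp add: sum_distrib_left)
  also have "\<dots> = of_nat (card D) *
      (\<Sum>f\<in>chars_B. \<Sum>x\<in>carrier G. conj_avg (zero_ext (inertia f) (inertia_char f)) (x \<otimes> g \<otimes> inv x))"
    using conj_avg_eq g by (simp add: sum_distrib_left sum.swap[of _ chars_B])
  also have "\<dots> = of_nat (card B) * (of_nat (card D) *
      (\<Sum>f\<in>chars_B. \<Sum>x\<in>carrier G. zero_ext (inertia f) (inertia_char f) (x \<otimes> g \<otimes> inv x)))"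
    unfolding conj_avg_def sum_conjugates_average[OF subgroup.subset[OF BG] g, symmetric]
    by (simp add: sum_distrib_left mult_ac)
  finally show ?thesis using card_B_pos by simp
qed

lemma induced_inertia_weighted:
  assumes f: "f \<in> chars_B"
  shows "(of_nat (card (stab f)) / of_nat (card L)) * induced G (inertia f) (inertia_char f) g =
    of_nat (card D) / (of_nat (card B) * of_nat (card L)) *
      (\<Sum>x\<in>carrier G. zero_ext (inertia f) (inertia_char f) (x \<otimes> g \<otimes> inv x))"
proof -
  have "card (inertia f) > 0"
    using finite_subset[OF subgroup.subset[OF inertia_subgroup[OF f]] fin]
      subgroup.one_closed[OF inertia_subgroup[OF f]] card_gt_0_iff by blast
  moreover have "of_nat (card (inertia f)) * of_nat (card D) = (of_nat (card (stab f)) * of_nat (card B) :: complex)"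
    using card_inertia[OF f] by (metis of_nat_mult)
  ultimately show ?thesis
    unfolding induced_eq_sum_zero_ext using card_B_pos card_L_pos card_D_pos by (auto simp: field_simps)
qed

lemma induced_L_eq_sum_inertia:
  assumes g: "g \<in> carrier G"
  shows "induced G L trivial_char g =
    (\<Sum>f\<in>chars_B. (of_nat (card (stab f)) / of_nat (card L)) * induced G (inertia f) (inertia_char f) g)"
proof -
  let ?S = "\<Sum>f\<in>chars_B. \<Sum>x\<in>carrier G. zero_ext (inertia f) (inertia_char f) (x \<otimes> g \<otimes> inv x)"
  have "induced G L trivial_char g = of_nat (card D) / (of_nat (card B) * of_nat (card L)) * ?S"
    using sum_conjugates_zero_ext_L[OF g] card_B_pos card_L_pos
    unfolding induced_eq_sum_zero_ext[of G L] by (simp add: field_simps)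
  also have "\<dots> = (\<Sum>f\<in>chars_B. (of_nat (card (stab f)) / of_nat (card L)) *
      induced G (inertia f) (inertia_char f) g)"
    by (subst sum_distrib_left, rule sum.cong[OF refl], rule induced_inertia_weighted[symmetric])
  finally show ?thesis .
qed

definition orbit :: "('a \<Rightarrow> complex) \<Rightarrow> ('a \<Rightarrow> complex) set" where
  "orbit f = (\<lambda>l. conj_char l f) ` L"

definition orbit_rep :: "('a \<Rightarrow> complex) \<Rightarrow> 'a \<Rightarrow> complex" where
  "orbit_rep f = (SOME h. h \<in> orbit f)"

context
  fixes f assumes f: "f \<in> chars_B"
begin

lemma orbit_subset_chars_B: "orbit f \<subseteq> chars_B"
  unfolding orbit_def using conj_char_in_chars_B[OF f] by blast

lemma mem_orbit_self: "f \<in> orbit f"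
  unfolding orbit_def using conj_char_one[OF f] subgroup.one_closed[OF LG] by (metis image_eqI)

lemma conj_char_eq_iff:
  assumes "l0 \<in> L" "l \<in> L"
  shows "conj_char l f = conj_char l0 f \<longleftrightarrow> inv l0 \<otimes> l \<in> stab f"
proof -
  have c: "l0 \<in> carrier G" "l \<in> carrier G" using assms L_closed by auto
  have m: "inv l0 \<otimes> l \<in> L" using assms LG by (simp add: subgroup.m_closed subgroup.m_inv_closed)
  have e1: "conj_char (inv l0 \<otimes> l) f = conj_char (inv l0) (conj_char l f)"
    using conj_char_mult c by simp
  have e2: "conj_char (inv l0) (conj_char l0 f) = f"
    using conj_char_mult[of "inv l0" l0 f] conj_char_one[OF f] c by simp
  have "l0 \<otimes> (inv l0 \<otimes> l) = l" using c by simp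
  then have e3: "conj_char l0 (conj_char (inv l0 \<otimes> l) f) = conj_char l f"
    using conj_char_mult[of l0 "inv l0 \<otimes> l" f] c by simp
  show ?thesis
  proof
    assume "conj_char l f = conj_char l0 f"
    then show "inv l0 \<otimes> l \<in> stab f" unfolding stab_def using m e1 e2 by simp
  next
    assume "inv l0 \<otimes> l \<in> stab f"
    then show "conj_char l f = conj_char l0 f" unfolding stab_def using e3 by simp
  qed
qed

lemma card_orbit_mult_card_stab: "card (orbit f) * card (stab f) = card L"
proof -
  have "card {l \<in> L. conj_char l f = h} = card (stab f)" if h: "h \<in> (\<lambda>l. conj_char l f) ` L" for h
  proof -
    obtain l0 where l0: "l0 \<in> L" "h = conj_char l0 f" using h by blast
    have l0c: "l0 \<in> carrier G" using L_closed l0(1) .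
    \<comment> \<open>the fibre over \<open>h\<close> is the coset \<open>l0 \<otimes> stab f\<close>\<close>
    have "{l \<in> L. conj_char l f = h} = (\<lambda>s. l0 \<otimes> s) ` stab f"
    proof (intro equalityI subsetI)
      fix l assume "l \<in> {l \<in> L. conj_char l f = h}"
      then have l: "l \<in> L" "inv l0 \<otimes> l \<in> stab f"
        using conj_char_eq_iff[OF l0(1)] l0(2) by blast+
      have "l = l0 \<otimes> (inv l0 \<otimes> l)" using l0c L_closed[OF l(1)] by simp
      then show "l \<in> (\<lambda>s. l0 \<otimes> s) ` stab f" using l(2) by blast
    next
      fix l assume "l \<in> (\<lambda>s. l0 \<otimes> s) ` stab f"
      then obtain s where s: "s \<in> stab f" "l = l0 \<otimes> s" by blast
      have sL: "s \<in> L" using s(1) stab_subset_L[OF f] by blast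
      have "l \<in> L" using l0(1) sL s(2) LG by (simp add: subgroup.m_closed)
      moreover have "inv l0 \<otimes> l = s" using s(2) l0c L_closed[OF sL] by simp
      ultimately show "l \<in> {l \<in> L. conj_char l f = h}"
        using conj_char_eq_iff[OF l0(1)] l0(2) s(1) by blast
    qed
    moreover have "inj_on (\<lambda>s. l0 \<otimes> s) (stab f)"
    proof (rule inj_onI)
      fix x y assume "x \<in> stab f" "y \<in> stab f" "l0 \<otimes> x = l0 \<otimes> y"
      then show "x = y" using l0c stab_subset_L[OF f] L_closed by (metis inv_m_cancel_left subsetD)
    qed
    ultimately show ?thesis by (simp add: card_image)
  qed
  then have "card L = card ((\<lambda>l. conj_char l f) ` L) * card (stab f)"
    by (rule card_eq_card_image_mult_fibers[OF finite_L])
  then show ?thesis unfolding orbit_def by simp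
qed

lemma orbit_eq: assumes h: "h \<in> orbit f" shows "orbit h = orbit f"
proof -
  obtain l0 where l0: "l0 \<in> L" "h = conj_char l0 f" using h unfolding orbit_def by blast
  have l0c: "l0 \<in> carrier G" using L_closed l0(1) .
  have "conj_char l h = conj_char (l \<otimes> l0) f" if "l \<in> L" for l
    using conj_char_mult L_closed[OF that] l0c l0(2) by simp
  moreover have "conj_char (inv l0) h = f"
    using conj_char_mult[of "inv l0" l0 f] conj_char_one[OF f] l0c l0(2) by simp
  then have "conj_char l f = conj_char (l \<otimes> inv l0) h" if "l \<in> L" for l
    using conj_char_mult L_closed[OF that] l0c by simp
  ultimately show ?thesis
    unfolding orbit_def using l0(1) LG by (auto simp: subgroup.m_closed subgroup.m_inv_closed)
qed

lemma stab_conj_char_iff: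
  assumes l0: "l0 \<in> L" and l: "l \<in> L"
  shows "l \<in> stab (conj_char l0 f) \<longleftrightarrow> inv l0 \<otimes> l \<otimes> l0 \<in> stab f"
proof -
  have c: "l0 \<in> carrier G" "l \<in> carrier G" using L_closed l0 l by auto
  have "inv l0 \<otimes> (l \<otimes> l0) = inv l0 \<otimes> l \<otimes> l0" using c by (simp add: m_assoc)
  then show ?thesis
    using conj_char_eq_iff[OF l0, of "l \<otimes> l0"] conj_char_mult[OF c(2,1)] l0 l LG
    unfolding stab_def by (auto simp: subgroup.m_closed subgroup.m_inv_closed)
qed

lemma zero_ext_inertia_conj_char:
  assumes l0: "l0 \<in> L" and w: "w \<in> carrier G"
  shows "zero_ext (inertia (conj_char l0 f)) (inertia_char (conj_char l0 f)) w =
    zero_ext (inertia f) (inertia_char f) (inv l0 \<otimes> w \<otimes> l0)"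
proof (cases "w \<in> LB")
  case False
  have l0c: "l0 \<in> carrier G" using L_closed l0 .
  have "inv l0 \<otimes> w \<otimes> inv (inv l0) \<notin> LB"
    using conj_notin_subgroup[OF LB_subgroup _ w False] L_subset_LB l0 LG
    by (simp add: subgroup.m_inv_closed subset_iff)
  then show ?thesis
    using False inertia_subset_LB l0c unfolding zero_ext_def by auto
next
  case True
  then obtain l b where lb: "l \<in> L" "b \<in> B" "w = l \<otimes> b" unfolding LB_def set_mult_def by blast
  have c: "l \<in> carrier G" "b \<in> carrier G" "l0 \<in> carrier G" using lb l0 L_closed B_closed by auto
  have "inv l0 \<otimes> w \<otimes> l0 = (inv l0 \<otimes> l \<otimes> l0) \<otimes> (inv l0 \<otimes> b \<otimes> l0)"
    using lb c by (simp add: m_assoc)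
  moreover have "inv l0 \<otimes> l \<otimes> l0 \<in> L" using l0 lb LG by (simp add: subgroup.m_closed subgroup.m_inv_closed)
  moreover have "conj_char l0 f b = f (inv l0 \<otimes> b \<otimes> l0)" unfolding conj_char_def using lb by simp
  ultimately show ?thesis
    using zero_ext_inertia_mult[OF f _ conj_in_B[OF c(3) lb(2)]]
      zero_ext_inertia_mult[OF conj_char_in_chars_B[OF f l0] lb(1,2)] stab_conj_char_iff[OF l0 lb(1)] lb(3)
    by simp
qed

end

lemma induced_inertia_conj_char:
  assumes f: "f \<in> chars_B" and l0: "l0 \<in> L" and g: "g \<in> carrier G"
  shows "induced G (inertia (conj_char l0 f)) (inertia_char (conj_char l0 f)) g =
    induced G (inertia f) (inertia_char f) g"
proof -
  let ?f' = "conj_char l0 f"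
  have l0c: "l0 \<in> carrier G" using L_closed l0 .
  have f': "?f' \<in> chars_B" using conj_char_in_chars_B[OF f l0] .
  have "(\<Sum>x\<in>carrier G. zero_ext (inertia ?f') (inertia_char ?f') (x \<otimes> g \<otimes> inv x)) =
      (\<Sum>x\<in>carrier G. zero_ext (inertia f) (inertia_char f) (inv l0 \<otimes> (x \<otimes> g \<otimes> inv x) \<otimes> inv (inv l0)))"
    using zero_ext_inertia_conj_char[OF f l0] g l0c by (intro sum.cong) auto
  also have "\<dots> = (\<Sum>x\<in>carrier G. zero_ext (inertia f) (inertia_char f) (x \<otimes> g \<otimes> inv x))"
    using sum_conj_conjugates[OF inv_closed[OF l0c] g] .
  finally have sums: "(\<Sum>x\<in>carrier G. zero_ext (inertia ?f') (inertia_char ?f') (x \<otimes> g \<otimes> inv x)) =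
      (\<Sum>x\<in>carrier G. zero_ext (inertia f) (inertia_char f) (x \<otimes> g \<otimes> inv x))" .
  have "orbit ?f' = orbit f" using orbit_eq[OF f] l0 unfolding orbit_def by blast
  then have "card (stab ?f') = card (stab f)"
    using card_orbit_mult_card_stab[OF f] card_orbit_mult_card_stab[OF f'] card_L_pos
    by (metis mult_left_cancel mult_is_0 not_gr_zero)
  then have "card (inertia ?f') = card (inertia f)"
    using card_inertia[OF f] card_inertia[OF f'] card_D_pos by (metis mult_right_cancel not_gr_zero)
  then show ?thesis unfolding induced_eq_sum_zero_ext sums by simp
qed

lemma orbit_rep_mem: "f \<in> chars_B \<Longrightarrow> orbit_rep f \<in> orbit f"
  unfolding orbit_rep_def using mem_orbit_self by (metis someI)

lemma orbit_rep_in_chars_B: "f \<in> chars_B \<Longrightarrow> orbit_rep f \<in> chars_B"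
  using orbit_rep_mem orbit_subset_chars_B by blast

lemma orbit_rep_fiber:
  assumes f: "f \<in> chars_B"
  shows "{h \<in> chars_B. orbit_rep h = orbit_rep f} = orbit (orbit_rep f)"
proof -
  have rep: "orbit (orbit_rep h) = orbit h" if "h \<in> chars_B" for h
    using orbit_eq[OF that orbit_rep_mem[OF that]] .
  have "orbit_rep h = orbit_rep f \<longleftrightarrow> orbit h = orbit f" if h: "h \<in> chars_B" for h
    using rep[OF h] rep[OF f] unfolding orbit_rep_def by metis
  moreover have "h \<in> orbit (orbit_rep f) \<longleftrightarrow> h \<in> chars_B \<and> orbit h = orbit f" for h
    using rep[OF f] orbit_eq[OF f] orbit_subset_chars_B[OF f] mem_orbit_self by blast
  ultimately show ?thesis by blast
qed

text \<open>Grouping a sum by \<open>L\<close>-orbits: each orbit carries total weight \<open>1\<close>.\<close>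
lemma sum_chars_B_by_orbits:
  fixes I :: "('a \<Rightarrow> complex) \<Rightarrow> complex"
  assumes inv: "\<And>f l. f \<in> chars_B \<Longrightarrow> l \<in> L \<Longrightarrow> I (conj_char l f) = I f"
  shows "(\<Sum>f\<in>chars_B. (of_nat (card (stab f)) / of_nat (card L)) * I f) = (\<Sum>r\<in>orbit_rep ` chars_B. I r)"
proof -
  have "of_nat (card (stab f)) / of_nat (card L) = 1 / (of_nat (card (orbit f)) :: complex)"
    if f: "f \<in> chars_B" for f
  proof -
    have "of_nat (card (orbit f)) * of_nat (card (stab f)) = (of_nat (card L) :: complex)"
      using card_orbit_mult_card_stab[OF f] by (metis of_nat_mult)
    moreover have "card (orbit f) > 0"
      using mem_orbit_self[OF f] finite_subset[OF orbit_subset_chars_B[OF f] finite_chars_B]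
        card_gt_0_iff by blast
    ultimately show ?thesis using card_L_pos by (simp add: field_simps)
  qed
  then have "(\<Sum>f\<in>chars_B. (of_nat (card (stab f)) / of_nat (card L)) * I f) =
      (\<Sum>f\<in>chars_B. I f / of_nat (card (orbit f)))"
    by (intro sum.cong) auto
  also have "\<dots> = (\<Sum>r\<in>orbit_rep ` chars_B. \<Sum>f\<in>{f \<in> chars_B. orbit_rep f = r}. I f / of_nat (card (orbit f)))"
    by (rule sum.group[symmetric]) (use finite_chars_B in auto)
  also have "\<dots> = (\<Sum>r\<in>orbit_rep ` chars_B. I r)"
  proof (rule sum.cong[OF refl])
    fix r assume "r \<in> orbit_rep ` chars_B"
    then obtain f where f: "f \<in> chars_B" "r = orbit_rep f" by blast
    have r: "r \<in> chars_B" using orbit_rep_in_chars_B f by simp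
    have "I h / of_nat (card (orbit h)) = I r / of_nat (card (orbit r))" if "h \<in> orbit r" for h
      using that inv[OF r] orbit_eq[OF r that] unfolding orbit_def by auto
    then have "(\<Sum>h\<in>{h \<in> chars_B. orbit_rep h = r}. I h / of_nat (card (orbit h))) =
        (\<Sum>h\<in>orbit r. I r / of_nat (card (orbit r)))"
      using orbit_rep_fiber[OF f(1)] f(2) by (intro sum.cong) auto
    also have "card (orbit r) > 0"
      using mem_orbit_self[OF r] finite_subset[OF orbit_subset_chars_B[OF r] finite_chars_B]
      card_gt_0_iff by blast
    then have "(\<Sum>h\<in>orbit r. I r / of_nat (card (orbit r))) = I r" by simp
    finally show "(\<Sum>h\<in>{h \<in> chars_B. orbit_rep h = r}. I h / of_nat (card (orbit h))) = I r" .
  qed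
  finally show ?thesis .
qed

lemma trivial_char_in_chars_B: "trivial_char \<in> chars_B"
  unfolding chars_B_def chars_mod_def trivial_char_def by simp

lemma conj_char_trivial_char: "conj_char l trivial_char = trivial_char"
  unfolding conj_char_def trivial_char_def by auto

lemma orbit_rep_trivial_char: "orbit_rep trivial_char = trivial_char"
proof -
  have "orbit trivial_char = {trivial_char}"
    unfolding orbit_def conj_char_trivial_char using subgroup.one_closed[OF LG] by auto
  then show ?thesis unfolding orbit_rep_def by simp
qed

lemma induced_inertia_trivial_char:
  "induced G (inertia trivial_char) (inertia_char trivial_char) = induced G LB trivial_char"
proof -
  have "inertia trivial_char = LB"
    unfolding inertia_def LB_def stab_def conj_char_trivial_char by simp
  moreover have "inertia_char trivial_char = trivial_char"
    unfolding inertia_char_def trivial_char_def by (simp add: fun_eq_iff)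
  ultimately show ?thesis by simp
qed

end

definition monomial_sum :: "('a, 'b) monoid_scheme \<Rightarrow> ('a \<Rightarrow> complex) \<Rightarrow> bool" where
  "monomial_sum G \<phi> \<longleftrightarrow> (\<exists>(r::nat) (Hs :: nat \<Rightarrow> 'a set) (chis :: nat \<Rightarrow> 'a \<Rightarrow> complex).
     (\<forall>j<r. subgroup (Hs j) G \<and> linear_char G (Hs j) (chis j)) \<and>
     (\<forall>g\<in>carrier G. \<phi> g = (\<Sum>j<r. induced G (Hs j) (chis j) g)))"

lemma monomial_sum_zero: "monomial_sum G (\<lambda>_. 0)"
  unfolding monomial_sum_def by (intro exI[of _ 0]) simp

lemma monomial_sum_induced:
  "subgroup H G \<Longrightarrow> linear_char G H chi \<Longrightarrow> monomial_sum G (induced G H chi)"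
  unfolding monomial_sum_def by (intro exI[of _ 1] exI[of _ "\<lambda>_. H"] exI[of _ "\<lambda>_. chi"]) simp

lemma monomial_sum_cong:
  "monomial_sum G \<phi> \<Longrightarrow> (\<And>g. g \<in> carrier G \<Longrightarrow> \<phi> g = \<psi> g) \<Longrightarrow> monomial_sum G \<psi>"
  unfolding monomial_sum_def by metis

lemma monomial_sum_add:
  assumes "monomial_sum G \<phi>" "monomial_sum G \<psi>"
  shows "monomial_sum G (\<lambda>g. \<phi> g + \<psi> g)"
proof -
  obtain r1 :: nat and Hs1 :: "nat \<Rightarrow> 'a set" and chis1 :: "nat \<Rightarrow> 'a \<Rightarrow> complex" where 1: "\<forall>j<r1. subgroup (Hs1 j) G \<and> linear_char G (Hs1 j) (chis1 j)"
    "\<forall>g\<in>carrier G. \<phi> g = (\<Sum>j<r1. induced G (Hs1 j) (chis1 j) g)"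
    using assms(1) unfolding monomial_sum_def by blast
  obtain r2 :: nat and Hs2 :: "nat \<Rightarrow> 'a set" and chis2 :: "nat \<Rightarrow> 'a \<Rightarrow> complex" where 2: "\<forall>j<r2. subgroup (Hs2 j) G \<and> linear_char G (Hs2 j) (chis2 j)"
    "\<forall>g\<in>carrier G. \<psi> g = (\<Sum>j<r2. induced G (Hs2 j) (chis2 j) g)"
    using assms(2) unfolding monomial_sum_def by blast
  define Hs where "Hs j = (if j < r1 then Hs1 j else Hs2 (j - r1))" for j
  define chis where "chis j = (if j < r1 then chis1 j else chis2 (j - r1))" for j
  have "\<forall>j<r1 + r2. subgroup (Hs j) G \<and> linear_char G (Hs j) (chis j)"
    using 1(1) 2(1) unfolding Hs_def chis_def by auto
  moreover have "\<forall>g\<in>carrier G. \<phi> g + \<psi> g = (\<Sum>j<r1 + r2. induced G (Hs j) (chis j) g)"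
    using 1(2) 2(2) unfolding sum_lessThan_add Hs_def chis_def by simp
  ultimately show ?thesis unfolding monomial_sum_def by blast
qed

lemma monomial_sum_sum:
  "finite A \<Longrightarrow> (\<And>a. a \<in> A \<Longrightarrow> monomial_sum G (\<phi> a)) \<Longrightarrow> monomial_sum G (\<lambda>g. \<Sum>a\<in>A. \<phi> a g)"
  by (induction A rule: finite_induct) (simp_all add: monomial_sum_zero monomial_sum_add)

lemma (in clifford_step) monomial_sum_induced_L_minus_LB:
  "monomial_sum G (\<lambda>g. induced G L trivial_char g - induced G LB trivial_char g)"
proof -
  let ?I = "\<lambda>f g. induced G (inertia f) (inertia_char f) g"
  let ?R = "orbit_rep ` chars_B - {trivial_char}"
  have "trivial_char \<in> orbit_rep ` chars_B"
    using trivial_char_in_chars_B orbit_rep_trivial_char by (metis image_eqI)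
  then have decomp: "induced G L trivial_char g = induced G LB trivial_char g + (\<Sum>r\<in>?R. ?I r g)"
    if "g \<in> carrier G" for g
    using induced_L_eq_sum_inertia[OF that] sum_chars_B_by_orbits[of "\<lambda>f. ?I f g"]
      induced_inertia_conj_char that finite_chars_B induced_inertia_trivial_char
    by (simp add: sum.remove)
  have "monomial_sum G (\<lambda>g. \<Sum>r\<in>?R. ?I r g)"
    using finite_chars_B orbit_rep_in_chars_B inertia_subgroup linear_char_inertia_char
    by (intro monomial_sum_sum monomial_sum_induced) auto
  then show ?thesis by (rule monomial_sum_cong) (simp add: decomp)
qed

context group
begin

lemma derived_series_Suc: "derived_series G (Suc m) = derived G (derived_series G m)"
  unfolding derived_series_def by simp

lemma derived_series_normal: "derived_series G m \<lhd> G"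
  by (induction m) (simp_all add: derived_series_def normal_self derived_is_normal)

lemma derived_series_subgroup: "subgroup (derived_series G m) G"
  using derived_series_normal normal_imp_subgroup by blast

lemma derived_series_Suc_subset: "derived_series G (Suc m) \<subseteq> derived_series G m"
  unfolding derived_series_Suc using derived_incl[OF subset_refl derived_series_subgroup] .

lemma derived_series_antimono: "m \<le> n \<Longrightarrow> derived_series G n \<subseteq> derived_series G m"
  by (induction n rule: dec_induct) (use derived_series_Suc_subset in blast)+

lemma commutators_in_derived_series: "commutators_in G (derived_series G m) (derived_series G (Suc m))"
  unfolding commutators_in_def derived_series_Suc derived_def by (blast intro: generate.incl)

lemma monomial_sum_derived_series_Suc:
  assumes fin: "finite (carrier G)" and HG: "subgroup H G"
  shows "monomial_sum G (\<lambda>g. induced G (H <#> derived_series G (Suc m)) trivial_char g -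
    induced G (H <#> derived_series G m) trivial_char g)"
proof -
  let ?L = "H <#> derived_series G (Suc m)" and ?B = "derived_series G m"
  have "\<one> \<otimes> x \<in> ?L" if "x \<in> derived_series G (Suc m)" for x
    using that subgroup.one_closed[OF HG] unfolding set_mult_def by blast
  then have "derived_series G (Suc m) \<subseteq> ?L"
    using subgroup.mem_carrier[OF derived_series_subgroup] by force
  then have "commutators_in G ?B ?L"
    using commutators_in_derived_series[of m] unfolding commutators_in_def by blast
  then interpret clifford_step G ?L ?B
    using fin set_mult_normal_subgroup[OF HG derived_series_normal] derived_series_normal
    by (intro clifford_step.intro clifford_step_axioms.intro is_group) auto
  have "LB = H <#> (derived_series G (Suc m) <#> ?B)"
    unfolding LB_def using set_mult_assoc subgroup.subset HG derived_series_subgroup by metis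
  then have "LB = H <#> ?B"
    using set_mult_subgroup_absorb[OF derived_series_subgroup derived_series_subgroup
        derived_series_Suc_subset] by simp
  then show ?thesis using monomial_sum_induced_L_minus_LB by simp
qed

lemma derived_series_set_mult_eventually:
  assumes "solvable G" "subgroup H G"
  obtains n where "i \<le> n" "H <#> derived_series G n = H"
proof -
  obtain k where "derived_series G k = {\<one>}"
    using assms(1) solvable_iff_trivial_derived_seq unfolding derived_series_def by blast
  then have "derived_series G (i + k) = {\<one>}"
    using derived_series_antimono[of k "i + k"] subgroup.one_closed[OF derived_series_subgroup] by auto
  then have "H <#> derived_series G (i + k) = H"
    using subgroup.subset[OF assms(2)] by (simp add: r_coset_eq_set_mult[symmetric])
  then show ?thesis using that[of "i + k"] by simp
qed

lemma monomial_sum_derived_series: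
  assumes "finite (carrier G)" "subgroup H G" "m \<le> n"
  shows "monomial_sum G (\<lambda>g. induced G (H <#> derived_series G n) trivial_char g -
    induced G (H <#> derived_series G m) trivial_char g)"
  using assms(3)
proof (induction n rule: dec_induct)
  case base
  show ?case by (rule monomial_sum_cong[OF monomial_sum_zero]) simp
next
  case (step n)
  show ?case
    by (rule monomial_sum_cong[OF monomial_sum_add[OF monomial_sum_derived_series_Suc[OF assms(1,2), of n] step.IH]])
      simp
qed

end

theorem corollary3p1p4:
  fixes G :: "('a, 'b) monoid_scheme" and H :: "'a set" and i :: nat
  assumes "group G" and "finite (carrier G)" and "solvable G"
    and "subgroup H G" and "i \<ge> 1"
  shows "\<exists>(r::nat) (Hs :: nat \<Rightarrow> 'a set) (chis :: nat \<Rightarrow> 'a \<Rightarrow> complex).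
           (\<forall>j<r. subgroup (Hs j) G \<and> linear_char G (Hs j) (chis j)) \<and>
           (\<forall>g\<in>carrier G.
              induced G H trivial_char g =
                induced G (H <#>\<^bsub>G\<^esub> derived_series G i) trivial_char g
                + (\<Sum>j<r. induced G (Hs j) (chis j) g))"
proof -
  obtain n where "i \<le> n" "H <#>\<^bsub>G\<^esub> derived_series G n = H"
    using group.derived_series_set_mult_eventually[OF assms(1,3,4)] by blast
  then have "monomial_sum G (\<lambda>g. induced G H trivial_char g -
      induced G (H <#>\<^bsub>G\<^esub> derived_series G i) trivial_char g)"
    using group.monomial_sum_derived_series[OF assms(1,2,4)] by metis
  then show ?thesis unfolding monomial_sum_def by (auto simp: algebra_simps)
qed

end
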